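(* Let $(\Lambda,d)$ be a $k$-graph and let $(\overline{\Lambda},\overline d)$ be the extension described in the context. Then $(\overline{\Lambda},\overline d)$ is a $k$-graph with no sources, i.e. $v\overline{\Lambda}^{n}\neq\emptyset$ for every vertex $v$ of $\overline{\Lambda}$ and every $n\in\mathbb{N}^k$.
   Context: A $k$-graph $(\Lambda,d)$ is a countable category with a degree functor $d:\Lambda\to\mathbb{N}^k$ satisfying unique factorization (if $d(\lambda)=m+n$ there are unique $\mu,\nu$ with $\lambda=\mu\nu$, $d(\mu)=m$, $d(\nu)=n$); $\Lambda^0$ vertices, $r,s$ range/source, $v\Lambda^n=\{\lambda:r(\lambda)=v,d(\lambda)=n\}$; a vertex $v$ is a source if $v\Lambda^n=\emptyset$ for some $n$. $e_i$ standard basis, $\le$ coordinatewise, $\vee,\wedge$ coordinatewise max/min. For $m\in(\mathbb{N}\cup\{\infty\})^k$, $\Omega_{k,m}$ has objects $\{p\in\mathbb{N}^k:p\le m\}$, morphisms $(p,q)$, $p\le q\le m$, $r(p,q)=p$, $s(p,q)=q$, $d(p,q)=q-p$. A graph morphism $x:\Omega_{k,m}\to\Lambda$ is a degree-preserving functor; $d(x)=m$, $x(a,b)=x((a,b))$, $x(a)=x(a,a)$. It is a boundary path if there is $n_x\in\mathbb{N}^k$, $n_x\le d(x)$, with $x(p)\Lambda^{e_i}=\emptyset$ whenever $p\in\mathbb{N}^k$, $n_x\le p\le d(x)$, $p_i=d(x)_i$; $\Lambda^{\le\infty}$ is the set of boundary paths. $\sigma^px(a,b)=x(a+p,b+p)$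 ($p\le d(x)$); $\lambda x$ is the concatenation of $\lambda$ (with $s(\lambda)=x(0)$) and $x$, a graph morphism on $\Omega_{k,d(\lambda)+d(x)}$. $V_\Lambda=\{(x;m):x\in\Lambda^{\le\infty},m\in\mathbb{N}^k,m\not\le d(x)\}$, $(x;m)\approx(y;p)$ iff $x(m\wedge d(x))=y(p\wedge d(y))$ and $m-m\wedge d(x)=p-p\wedge d(y)$; classes $[x;m]$ form $\widetilde{V_\Lambda}$. $P_\Lambda=\{(x;(m,n)):x\in\Lambda^{\le\infty},m\le n\in\mathbb{N}^k,n\not\le d(x)\}$, $(x;(m,n))\sim(y;(p,q))$ iff $x(m\wedge d(x),n\wedge d(x))=y(p\wedge d(y),q\wedge d(y))$, $m-m\wedge d(x)=p-p\wedge d(y)$, $n-m=q-p$; classes $[x;(m,n)]$ form $\widetilde{P_\Lambda}$. The extension $\overline{\Lambda}$ has objects $\Lambda^0\sqcup\widetilde{V_\Lambda}$ and morphisms $\Lambda\sqcup\widetilde{P_\Lambda}$: on $\Lambda$ everything is as in $\Lambda$; $\overline r([x;(m,n)])=x(m)$ if $m\le d(x)$, else $[x;m]$; $\overline s([x;(m,n)])=[x;n]$; identity at $[x;m]$ is $[x;(m,m)]$; $\lambda[x;(m,n)]=[\lambda\sigma^mx;(0,d(\lambda)+n-m)]$ when $s(\lambda)=\overline r([x;(m,n)])$; $[x;(m,n)][y;(p,q)]=[z;(m,n+q-p)]$ with $z=x(0,n\wedge d(x))\sigma^{p\wedge d(y)}y$ when $\overline s([x;(m,n)])=\overline r([y;(p,q)])$.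 The degree is $\overline d|_\Lambda=d$, $\overline d([x;(m,n)])=n-m$. *)

theory Defs
  imports Main "HOL-Library.Function_Algebras" "HOL-Library.Extended_Nat" "HOL-Library.Countable_Set"
begin

text \<open>Elements of N^k are functions 'k => nat (with 'k a finite type of k elements);
  pointwise order, pointwise +, -, sup (join), inf (meet).
  Elements of (N u {oo})^k are functions 'k => enat.\<close>

record ('v, 'a, 'k) kgraph =
  kobj :: "'v set"
  kmor :: "'a set"
  krg  :: "'a \<Rightarrow> 'v"
  ksr  :: "'a \<Rightarrow> 'v"
  kcp  :: "'a \<Rightarrow> 'a \<Rightarrow> 'a"
  kid  :: "'v \<Rightarrow> 'a"
  kdg  :: "'a \<Rightarrow> 'k \<Rightarrow> nat"

definition k_graph :: "('v, 'a, 'k) kgraph \<Rightarrow> bool" where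
  "k_graph G \<longleftrightarrow>
     countable (kobj G) \<and> countable (kmor G) \<and>
     (\<forall>a\<in>kmor G. krg G a \<in> kobj G \<and> ksr G a \<in> kobj G) \<and>
     (\<forall>v\<in>kobj G. kid G v \<in> kmor G \<and> krg G (kid G v) = v \<and> ksr G (kid G v) = v
                  \<and> kdg G (kid G v) = 0) \<and>
     (\<forall>a\<in>kmor G. \<forall>b\<in>kmor G. ksr G a = krg G b \<longrightarrow>
         kcp G a b \<in> kmor G \<and> krg G (kcp G a b) = krg G a \<and> ksr G (kcp G a b) = ksr G b
         \<and> kdg G (kcp G a b) = kdg G a + kdg G b) \<and>
     (\<forall>a\<in>kmor G. \<forall>b\<in>kmor G. \<forall>c\<in>kmor G. ksr G a = krg G b \<and> ksr G b = krg G c \<longrightarrow>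
         kcp G (kcp G a b) c = kcp G a (kcp G b c)) \<and>
     (\<forall>a\<in>kmor G. kcp G (kid G (krg G a)) a = a \<and> kcp G a (kid G (ksr G a)) = a) \<and>
     (\<forall>l\<in>kmor G. \<forall>m n. kdg G l = m + n \<longrightarrow>
         (\<exists>!p. p \<in> kmor G \<times> kmor G \<and> ksr G (fst p) = krg G (snd p)
               \<and> kcp G (fst p) (snd p) = l \<and> kdg G (fst p) = m \<and> kdg G (snd p) = n))"

definition e_vec :: "'k \<Rightarrow> 'k \<Rightarrow> nat" where
  "e_vec i = (\<lambda>j. if j = i then 1 else 0)"

definition le_en :: "('k \<Rightarrow> nat) \<Rightarrow> ('k \<Rightarrow> enat) \<Rightarrow> bool" where
  "le_en p m \<longleftrightarrow> (\<forall>i. enat (p i) \<le> m i)"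

definition meet_en :: "('k \<Rightarrow> nat) \<Rightarrow> ('k \<Rightarrow> enat) \<Rightarrow> 'k \<Rightarrow> nat" where
  "meet_en p m = (\<lambda>i. the_enat (min (enat (p i)) (m i)))"

text \<open>A graph morphism x : Omega_{k,m} -> Lambda is represented by the pair (m, x) where
  x p q is the image of the morphism (p,q) (values outside p \<le> q \<le> m are irrelevant).\<close>
type_synonym ('a, 'k) gmor = "('k \<Rightarrow> enat) \<times> (('k \<Rightarrow> nat) \<Rightarrow> ('k \<Rightarrow> nat) \<Rightarrow> 'a)"

definition vtx :: "('v, 'a, 'k) kgraph \<Rightarrow> (('k \<Rightarrow> nat) \<Rightarrow> ('k \<Rightarrow> nat) \<Rightarrow> 'a) \<Rightarrow> ('k \<Rightarrow> nat) \<Rightarrow> 'v" where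
  "vtx G x p = krg G (x p p)"

definition is_gm :: "('v, 'a, 'k) kgraph \<Rightarrow> ('a, 'k) gmor \<Rightarrow> bool" where
  "is_gm G y \<longleftrightarrow> (case y of (m, x) \<Rightarrow>
     (\<forall>p q. p \<le> q \<and> le_en q m \<longrightarrow> x p q \<in> kmor G \<and> kdg G (x p q) = q - p) \<and>
     (\<forall>p. le_en p m \<longrightarrow> x p p = kid G (krg G (x p p))) \<and>
     (\<forall>p q t. p \<le> q \<and> q \<le> t \<and> le_en t m \<longrightarrow>
         ksr G (x p q) = krg G (x q t) \<and> kcp G (x p q) (x q t) = x p t))"

definition is_bp :: "('v, 'a, 'k) kgraph \<Rightarrow> ('a, 'k) gmor \<Rightarrow> bool" where
  "is_bp G y \<longleftrightarrow> is_gm G y \<and> (case y of (m, x) \<Rightarrow>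
     (\<exists>nx. le_en nx m \<and>
        (\<forall>p i. nx \<le> p \<and> le_en p m \<and> enat (p i) = m i \<longrightarrow>
            \<not> (\<exists>l\<in>kmor G. krg G l = vtx G x p \<and> kdg G l = e_vec i))))"

definition V_set :: "('v, 'a, 'k) kgraph \<Rightarrow> (('a, 'k) gmor \<times> ('k \<Rightarrow> nat)) set" where
  "V_set G = {(y, a). is_bp G y \<and> \<not> le_en a (fst y)}"

definition V_rel :: "('v, 'a, 'k) kgraph \<Rightarrow> ('a, 'k) gmor \<times> ('k \<Rightarrow> nat) \<Rightarrow> ('a, 'k) gmor \<times> ('k \<Rightarrow> nat) \<Rightarrow> bool" where
  "V_rel G u w = (case u of ((m, x), a) \<Rightarrow> case w of ((m', y), b) \<Rightarrow>
     vtx G x (meet_en a m) = vtx G y (meet_en b m') \<and> a - meet_en a m = b - meet_en b m')"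

definition Vcls :: "('v, 'a, 'k) kgraph \<Rightarrow> ('a, 'k) gmor \<times> ('k \<Rightarrow> nat) \<Rightarrow> (('a, 'k) gmor \<times> ('k \<Rightarrow> nat)) set" where
  "Vcls G u = {w \<in> V_set G. V_rel G u w}"

definition P_set :: "('v, 'a, 'k) kgraph \<Rightarrow> (('a, 'k) gmor \<times> ('k \<Rightarrow> nat) \<times> ('k \<Rightarrow> nat)) set" where
  "P_set G = {(y, a, b). is_bp G y \<and> a \<le> b \<and> \<not> le_en b (fst y)}"

definition P_rel :: "('v, 'a, 'k) kgraph \<Rightarrow> ('a, 'k) gmor \<times> ('k \<Rightarrow> nat) \<times> ('k \<Rightarrow> nat)
      \<Rightarrow> ('a, 'k) gmor \<times> ('k \<Rightarrow> nat) \<times> ('k \<Rightarrow> nat) \<Rightarrow> bool" where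
  "P_rel G u w = (case u of ((m, x), a, b) \<Rightarrow> case w of ((m', y), c, e) \<Rightarrow>
     x (meet_en a m) (meet_en b m) = y (meet_en c m') (meet_en e m')
     \<and> a - meet_en a m = c - meet_en c m' \<and> b - a = e - c)"

definition Pcls :: "('v, 'a, 'k) kgraph \<Rightarrow> ('a, 'k) gmor \<times> ('k \<Rightarrow> nat) \<times> ('k \<Rightarrow> nat)
      \<Rightarrow> (('a, 'k) gmor \<times> ('k \<Rightarrow> nat) \<times> ('k \<Rightarrow> nat)) set" where
  "Pcls G u = {w \<in> P_set G. P_rel G u w}"

definition Vtilde where "Vtilde G = Vcls G ` V_set G"
definition Ptilde where "Ptilde G = Pcls G ` P_set G"

definition seg :: "('v, 'a, 'k) kgraph \<Rightarrow> 'a \<Rightarrow> ('k \<Rightarrow> nat) \<Rightarrow> ('k \<Rightarrow> nat) \<Rightarrow> 'a" where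
  "seg G mu p q = (THE nu. \<exists>al be. al \<in> kmor G \<and> nu \<in> kmor G \<and> be \<in> kmor G
       \<and> ksr G al = krg G nu \<and> ksr G nu = krg G be
       \<and> kcp G (kcp G al nu) be = mu
       \<and> kdg G al = p \<and> kdg G nu = q - p \<and> kdg G be = kdg G mu - q)"

definition shift :: "('a, 'k) gmor \<Rightarrow> ('k \<Rightarrow> nat) \<Rightarrow> ('a, 'k) gmor" where
  "shift y p = (case y of (m, x) \<Rightarrow> (\<lambda>i. m i - enat (p i), \<lambda>a b. x (a + p) (b + p)))"

definition cat :: "('v, 'a, 'k) kgraph \<Rightarrow> 'a \<Rightarrow> ('a, 'k) gmor \<Rightarrow> ('a, 'k) gmor" where
  "cat G l y = (case y of (m, x) \<Rightarrow>
     (\<lambda>i. enat (kdg G l i) + m i,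
      \<lambda>p q. seg G (kcp G l (x 0 (sup q (kdg G l) - kdg G l))) p q))"

definition rep :: "'b set \<Rightarrow> 'b" where "rep c = (SOME z. z \<in> c)"

type_synonym ('a, 'k) vcls = "(('a, 'k) gmor \<times> ('k \<Rightarrow> nat)) set"
type_synonym ('a, 'k) pcls = "(('a, 'k) gmor \<times> ('k \<Rightarrow> nat) \<times> ('k \<Rightarrow> nat)) set"

definition ext :: "('v, 'a, 'k) kgraph \<Rightarrow> ('v + ('a, 'k) vcls, 'a + ('a, 'k) pcls, 'k) kgraph" where
  "ext G = \<lparr>
     kobj = Inl ` kobj G \<union> Inr ` Vtilde G,
     kmor = Inl ` kmor G \<union> Inr ` Ptilde G,
     krg = (\<lambda>f. case f of Inl a \<Rightarrow> Inl (krg G a)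
                | Inr c \<Rightarrow> (case rep c of ((m, x), a, b) \<Rightarrow>
                     if le_en a m then Inl (vtx G x a) else Inr (Vcls G ((m, x), a)))),
     ksr = (\<lambda>f. case f of Inl a \<Rightarrow> Inl (ksr G a)
                | Inr c \<Rightarrow> (case rep c of ((m, x), a, b) \<Rightarrow> Inr (Vcls G ((m, x), b)))),
     kcp = (\<lambda>f g. case f of
                Inl l \<Rightarrow> (case g of
                    Inl b \<Rightarrow> Inl (kcp G l b)
                  | Inr c \<Rightarrow> (case rep c of (y, a, b) \<Rightarrow>
                       Inr (Pcls G (cat G l (shift y a), 0, kdg G l + b - a))))
              | Inr c \<Rightarrow> (case g of
                    Inl b \<Rightarrow> undefined
                  | Inr c' \<Rightarrow> (case rep c of ((m, x), a, b) \<Rightarrow>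
                       case rep c' of ((m', y), p, q) \<Rightarrow>
                       Inr (Pcls G (cat G (x 0 (meet_en b m)) (shift (m', y) (meet_en p m')),
                                    a, b + q - p))))),
     kid = (\<lambda>v. case v of Inl w \<Rightarrow> Inl (kid G w)
                | Inr c \<Rightarrow> (case rep c of (y, a) \<Rightarrow> Inr (Pcls G (y, a, a)))),
     kdg = (\<lambda>f. case f of Inl a \<Rightarrow> kdg G a | Inr c \<Rightarrow> (case rep c of (y, a, b) \<Rightarrow> b - a))
   \<rparr>"

end

theory Submission
  imports Defs
begin

text \<open>A morphism [x;(m,n)] of the extension is determined by its key
  (x(m \<and> d(x), n \<and> d(x)), m - m \<and> d(x), n - m): the part of x it covers, the offset of its
  range beyond the end of x, and its degree; a vertex [x;m] is determined by
  (x(m \<and> d(x)), m - m \<and> d(x)). Range, source, degree, identities and composition of the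
  extension are given on keys by explicit formulas, and on well-formed keys these satisfy the
  category laws and uniqueness of factorisations because the original graph does. As distinct
  morphisms have distinct keys, the extension is a k-graph; factorisations exist because
  [x;(a,b)] = [x;(a,c)][x;(c,b)] for a \<le> c \<le> b.

  There are no sources: every vertex v of the original graph is the range of a boundary path x,
  obtained as the limit of paths from v that are greedily extended by an edge of each colour
  whenever possible, and [x;(0,n)] has range v and degree n; a vertex [x;a] is the range of
  [x;(a,a+n)].\<close>

section \<open>Arithmetic in \<open>\<nat>\<^sup>k\<close> and \<open>(\<nat> \<union> {\<infinity>})\<^sup>k\<close>\<close>

lemma add_diff_inverse_fun: "(p::'k \<Rightarrow> nat) \<le> q \<Longrightarrow> p + (q - p) = q"
  by (simp add: le_fun_def fun_eq_iff)

lemma diff_split_fun: "(p::'k \<Rightarrow> nat) \<le> q \<Longrightarrow> q \<le> t \<Longrightarrow> t - p = (q - p) + (t - q)"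
  by (simp add: le_fun_def fun_eq_iff)

lemma le_add_fun: "(p::'k \<Rightarrow> nat) \<le> p + q"
  by (simp add: le_fun_def)

lemma zero_le_fun: "(0::'k \<Rightarrow> nat) \<le> p"
  by (simp add: le_fun_def)

lemma le_en_trans: "p \<le> q \<Longrightarrow> le_en q m \<Longrightarrow> le_en p m"
  unfolding le_en_def le_fun_def by (meson enat_ord_simps(1) order_trans)

lemma le_en_zero: "le_en 0 m"
  by (simp add: le_en_def zero_enat_def[symmetric])

lemma enat_le_diff_iff: "enat a \<le> M \<Longrightarrow> (enat q \<le> M - enat a) = (enat (q + a) \<le> M)"
  by (cases M) auto

lemma enat_eq_diff_iff: "enat a \<le> M \<Longrightarrow> (enat q = M - enat a) = (enat (q + a) = M)"
  by (cases M) auto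

lemma enat_add_le_add_iff: "(enat (a + b) \<le> enat a + M) = (enat b \<le> M)"
  by (cases M) auto

lemma enat_add_eq_add_iff: "(enat (a + b) = enat a + M) = (enat b = M)"
  by (cases M) auto

definition meet_enat :: "nat \<Rightarrow> enat \<Rightarrow> nat" where
  "meet_enat a M = the_enat (min (enat a) M)"

lemma meet_en_apply: "meet_en a m i = meet_enat (a i) (m i)"
  by (simp add: meet_en_def meet_enat_def)

lemma meet_enat_le_bound: "enat (meet_enat a M) \<le> M"
  and meet_enat_eq: "enat a \<le> M \<Longrightarrow> meet_enat a M = a"
  and meet_enat_zero: "meet_enat 0 M = 0"
  and meet_enat_mono: "a \<le> b \<Longrightarrow> meet_enat a M \<le> meet_enat b M"
  by (cases M; auto simp: meet_enat_def)+

lemma le_en_meet_en: "le_en (meet_en a m) m"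
  unfolding le_en_def by (simp add: meet_en_apply meet_enat_le_bound)

lemma meet_en_eq: "le_en a m \<Longrightarrow> meet_en a m = a"
  unfolding le_en_def by (simp add: fun_eq_iff meet_en_apply meet_enat_eq)

lemma meet_en_zero: "meet_en 0 m = 0"
  by (simp add: fun_eq_iff meet_en_apply meet_enat_zero)

lemma meet_en_mono: "a \<le> b \<Longrightarrow> meet_en a m \<le> meet_en b m"
  by (rule le_funI) (simp add: meet_en_apply meet_enat_mono le_funD)

lemma le_en_iff_diff_meet_en: "le_en a m = (a - meet_en a m = 0)"
proof -
  have "(enat (a i) \<le> m i) = (a i - meet_enat (a i) (m i) = 0)" for i
    by (cases "m i") (auto simp: meet_enat_def)
  then show ?thesis
    unfolding le_en_def by (simp add: fun_eq_iff meet_en_apply)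
qed

lemma meet_enat_diff_le: "a \<le> b \<Longrightarrow> meet_enat b M - meet_enat a M \<le> b - a"
  and meet_enat_diff_beyond: "a \<le> b \<Longrightarrow> a - meet_enat a M \<noteq> 0 \<Longrightarrow> meet_enat b M - meet_enat a M = 0"
  and meet_enat_offset: "a \<le> b \<Longrightarrow>
    b - meet_enat b M = (a - meet_enat a M) + (b - a) - (meet_enat b M - meet_enat a M)"
  by (cases M; auto simp: meet_enat_def)+

text \<open>Coordinatewise bookkeeping for the domains of the concatenated paths used in composition:
  \<open>\<lambda> \<sigma>\<^sup>a x\<close> and \<open>x(0, b \<and> d(x)) \<sigma>\<^sup>P y\<close> with \<open>P = p \<and> d(y)\<close>.\<close>

lemma meet_enat_cp_path_class:
  fixes a b d :: nat and M :: enat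
  assumes "a \<le> b" "enat a \<le> M"
  shows "meet_enat (d + b - a) (enat d + (M - enat a)) = d + meet_enat b M - a"
    and "\<not> enat b \<le> M \<Longrightarrow> \<not> enat (d + b - a) \<le> enat d + (M - enat a)"
  using assms by (cases M; auto simp: meet_enat_def min_def split: if_splits)+

lemma meet_enat_cp_class_class:
  fixes a b p q :: nat and M M' :: enat
  assumes "a \<le> b" "p \<le> q" "b - meet_enat b M = p - meet_enat p M'"
  defines "M'' \<equiv> enat (meet_enat b M) + (M' - enat (meet_enat p M'))"
  shows "meet_enat a M'' = meet_enat a M"
    and "meet_enat (b + q - p) M'' = meet_enat b M + meet_enat q M' - meet_enat p M'"
    and "\<not> enat b \<le> M \<Longrightarrow> \<not> enat (b + q - p) \<le> M''"
  using assms by (cases M; cases M'; auto simp: meet_enat_def min_def split: if_splits)+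

lemma SUP_enat_reaches:
  fixes f :: "nat \<Rightarrow> nat"
  assumes "enat n \<le> (SUP j. enat (f j))"
  obtains j where "n \<le> f j"
proof -
  have "\<exists>j. n \<le> f j"
  proof (rule ccontr)
    assume "\<not> (\<exists>j. n \<le> f j)"
    then have lt: "f j < n" for j
      by (simp add: not_le)
    have "f j \<le> n - 1" for j
      using lt[of j] by simp
    then have "(SUP j. enat (f j)) \<le> enat (n - 1)"
      by (intro SUP_least) simp
    then have "enat n \<le> enat (n - 1)"
      using assms by (rule order_trans[rotated])
    then show False
      using lt[of 0] by simp
  qed
  then show thesis
    using that by blast
qed

type_synonym ('a, 'k) mkey = "'a + ('a \<times> ('k \<Rightarrow> nat) \<times> ('k \<Rightarrow> nat))"
type_synonym ('v, 'k) okey = "'v + ('v \<times> ('k \<Rightarrow> nat))"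

section \<open>Factorisations in a k-graph\<close>

locale k_graph_ctx =
  fixes G :: "('v, 'a, 'k::finite) kgraph"
  assumes k_graph: "k_graph G"
begin

abbreviation "OG \<equiv> kobj G"
abbreviation "MG \<equiv> kmor G"
abbreviation "rG \<equiv> krg G"
abbreviation "sG \<equiv> ksr G"
abbreviation "cG \<equiv> kcp G"
abbreviation "iG \<equiv> kid G"
abbreviation "dG \<equiv> kdg G"

lemma countable_obj: "countable OG"
  and countable_mor: "countable MG"
  using k_graph unfolding k_graph_def by blast+

lemma rg_obj: "a \<in> MG \<Longrightarrow> rG a \<in> OG"
  and sr_obj: "a \<in> MG \<Longrightarrow> sG a \<in> OG"
  using k_graph unfolding k_graph_def by blast+

lemma id_mor: "v \<in> OG \<Longrightarrow> iG v \<in> MG"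
  and rg_id: "v \<in> OG \<Longrightarrow> rG (iG v) = v"
  and sr_id: "v \<in> OG \<Longrightarrow> sG (iG v) = v"
  and dg_id: "v \<in> OG \<Longrightarrow> dG (iG v) = 0"
  using k_graph unfolding k_graph_def by blast+

lemma cp_mor: "a \<in> MG \<Longrightarrow> b \<in> MG \<Longrightarrow> sG a = rG b \<Longrightarrow> cG a b \<in> MG"
  and rg_cp: "a \<in> MG \<Longrightarrow> b \<in> MG \<Longrightarrow> sG a = rG b \<Longrightarrow> rG (cG a b) = rG a"
  and sr_cp: "a \<in> MG \<Longrightarrow> b \<in> MG \<Longrightarrow> sG a = rG b \<Longrightarrow> sG (cG a b) = sG b"
  and dg_cp: "a \<in> MG \<Longrightarrow> b \<in> MG \<Longrightarrow> sG a = rG b \<Longrightarrow> dG (cG a b) = dG a + dG b"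
  using k_graph unfolding k_graph_def by blast+

lemma cp_assoc:
  "a \<in> MG \<Longrightarrow> b \<in> MG \<Longrightarrow> c \<in> MG \<Longrightarrow> sG a = rG b \<Longrightarrow> sG b = rG c \<Longrightarrow>
   cG (cG a b) c = cG a (cG b c)"
  using k_graph unfolding k_graph_def by blast

lemma id_cp: "a \<in> MG \<Longrightarrow> cG (iG (rG a)) a = a"
  and cp_id: "a \<in> MG \<Longrightarrow> cG a (iG (sG a)) = a"
  using k_graph unfolding k_graph_def by blast+

lemma factorisation_ex1:
  "l \<in> MG \<Longrightarrow> dG l = m + n \<Longrightarrow>
   \<exists>!p. p \<in> MG \<times> MG \<and> sG (fst p) = rG (snd p) \<and> cG (fst p) (snd p) = l
        \<and> dG (fst p) = m \<and> dG (snd p) = n"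
  using k_graph unfolding k_graph_def by blast

lemma factorisation:
  assumes "l \<in> MG" "dG l = m + n"
  obtains a b where "a \<in> MG" "b \<in> MG" "sG a = rG b" "cG a b = l" "dG a = m" "dG b = n"
  using ex1_implies_ex[OF factorisation_ex1[OF assms]] that by auto

lemma factorisation_unique:
  assumes "a \<in> MG" "b \<in> MG" "a' \<in> MG" "b' \<in> MG" "sG a = rG b" "sG a' = rG b'"
    and "cG a b = cG a' b'" "dG a = dG a'"
  shows "a = a' \<and> b = b'"
proof -
  have "dG a + dG b = dG a' + dG b'"
    using assms dg_cp by metis
  then have "dG b = dG b'"
    using assms(8) by simp
  moreover have "dG (cG a b) = dG a + dG b"
    using assms dg_cp by blast
  ultimately have "(a, b) = (a', b')"
    using factorisation_ex1[of "cG a b" "dG a" "dG b"] assms cp_mor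
    by (metis fst_conv snd_conv mem_Times_iff)
  then show ?thesis by simp
qed

lemma degree_zero_id: "e \<in> MG \<Longrightarrow> dG e = 0 \<Longrightarrow> e = iG (rG e)"
  using factorisation_unique[of "iG (rG e)" e e "iG (sG e)"]
  by (simp add: id_cp cp_id id_mor rg_id sr_id dg_id rg_obj sr_obj)

lemma seg_eqI:
  assumes "al \<in> MG" "nu \<in> MG" "be \<in> MG" "sG al = rG nu" "sG nu = rG be"
    and "cG (cG al nu) be = mu" "dG al = p" "q = p + dG nu"
  shows "seg G mu p q = nu"
  unfolding seg_def
proof (rule the_equality)
  have al_nu: "cG al nu \<in> MG" "sG (cG al nu) = rG be" "dG (cG al nu) = p + dG nu"
    using assms by (simp_all add: cp_mor sr_cp dg_cp)
  then have "dG mu = q + dG be"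
    using assms dg_cp by metis
  then show "\<exists>al' be'. al' \<in> MG \<and> nu \<in> MG \<and> be' \<in> MG \<and> sG al' = rG nu \<and> sG nu = rG be'
      \<and> cG (cG al' nu) be' = mu \<and> dG al' = p \<and> dG nu = q - p \<and> dG be' = dG mu - q"
    using assms by auto
  fix nu'
  assume "\<exists>al' be'. al' \<in> MG \<and> nu' \<in> MG \<and> be' \<in> MG \<and> sG al' = rG nu' \<and> sG nu' = rG be'
      \<and> cG (cG al' nu') be' = mu \<and> dG al' = p \<and> dG nu' = q - p \<and> dG be' = dG mu - q"
  then obtain al' be' where h: "al' \<in> MG" "nu' \<in> MG" "be' \<in> MG" "sG al' = rG nu'"
    "sG nu' = rG be'" "cG (cG al' nu') be' = mu" "dG al' = p" "dG nu' = q - p"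
    by blast
  have "cG al' nu' \<in> MG" "sG (cG al' nu') = rG be'" "dG (cG al' nu') = p + dG nu"
    using h assms(8) by (simp_all add: cp_mor sr_cp dg_cp)
  then have "cG al' nu' = cG al nu"
    using factorisation_unique[of "cG al' nu'" be' "cG al nu" be] h al_nu assms by simp
  then show "nu' = nu"
    using factorisation_unique[of al' nu' al nu] h assms by simp
qed

lemma seg_factorisation:
  assumes "mu \<in> MG" "p \<le> q" "q \<le> dG mu"
  obtains al be where "al \<in> MG" "be \<in> MG" "seg G mu p q \<in> MG"
    "sG al = rG (seg G mu p q)" "sG (seg G mu p q) = rG be"
    "cG (cG al (seg G mu p q)) be = mu"
    "dG al = p" "dG (seg G mu p q) = q - p" "dG be = dG mu - q"
proof -
  have "dG mu = p + (dG mu - p)"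
    using assms order_trans add_diff_inverse_fun by metis
  then obtain al rho where al: "al \<in> MG" "rho \<in> MG" "sG al = rG rho" "cG al rho = mu"
    "dG al = p" "dG rho = dG mu - p"
    using factorisation[OF assms(1)] by metis
  have "dG rho = (q - p) + (dG mu - q)"
    using al(6) assms diff_split_fun by metis
  then obtain nu be where nu: "nu \<in> MG" "be \<in> MG" "sG nu = rG be" "cG nu be = rho"
    "dG nu = q - p" "dG be = dG mu - q"
    using factorisation[OF al(2)] by metis
  have "rG nu = rG rho"
    using nu rg_cp by metis
  moreover have "cG (cG al nu) be = mu"
    using cp_assoc[of al nu be] al nu calculation by simp
  moreover have "seg G mu p q = nu"
    using seg_eqI[OF al(1) nu(1,2)] al nu assms(2) calculation add_diff_inverse_fun by metis
  ultimately show thesis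
    using that[of al be] al nu by simp
qed

lemma seg_mor: "mu \<in> MG \<Longrightarrow> p \<le> q \<Longrightarrow> q \<le> dG mu \<Longrightarrow> seg G mu p q \<in> MG"
  and dg_seg: "mu \<in> MG \<Longrightarrow> p \<le> q \<Longrightarrow> q \<le> dG mu \<Longrightarrow> dG (seg G mu p q) = q - p"
  by (metis seg_factorisation)+

lemma seg_all: "mu \<in> MG \<Longrightarrow> seg G mu 0 (dG mu) = mu"
  by (rule seg_eqI[of "iG (rG mu)" mu "iG (sG mu)"])
    (simp_all add: id_mor rg_id sr_id dg_id rg_obj sr_obj id_cp cp_id)

lemma seg_end: "mu \<in> MG \<Longrightarrow> seg G mu (dG mu) (dG mu) = iG (sG mu)"
  by (rule seg_eqI[of mu "iG (sG mu)" "iG (sG mu)"])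
    (simp_all add: id_mor rg_id sr_id dg_id sr_obj cp_id)

lemma seg_cp_right:
  assumes "mu \<in> MG" "nu \<in> MG" "sG mu = rG nu" "p \<le> q" "q \<le> dG mu"
  shows "seg G (cG mu nu) p q = seg G mu p q"
proof -
  obtain al be where h: "al \<in> MG" "be \<in> MG" "seg G mu p q \<in> MG"
    "sG al = rG (seg G mu p q)" "sG (seg G mu p q) = rG be"
    "cG (cG al (seg G mu p q)) be = mu" "dG al = p" "dG (seg G mu p q) = q - p"
    using seg_factorisation[OF assms(1,4,5)] by metis
  have "cG al (seg G mu p q) \<in> MG" "sG (cG al (seg G mu p q)) = rG be"
    using h by (simp_all add: cp_mor sr_cp)
  moreover have "sG be = rG nu"
    using calculation h assms(3) sr_cp by metis
  ultimately show ?thesis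
    using h assms(2,4) cp_assoc[of "cG al (seg G mu p q)" be nu]
    by (intro seg_eqI[of al _ "cG be nu"]) (simp_all add: cp_mor rg_cp le_fun_def fun_eq_iff)
qed

lemma seg_cp_seg:
  assumes "mu \<in> MG" "p \<le> q" "q \<le> t" "t \<le> dG mu"
  shows "sG (seg G mu p q) = rG (seg G mu q t)"
    and "cG (seg G mu p q) (seg G mu q t) = seg G mu p t"
proof -
  have pt: "p \<le> t"
    using assms order_trans by blast
  obtain al be where h: "al \<in> MG" "be \<in> MG" "seg G mu p t \<in> MG"
    "sG al = rG (seg G mu p t)" "sG (seg G mu p t) = rG be"
    "cG (cG al (seg G mu p t)) be = mu" "dG al = p" "dG (seg G mu p t) = t - p"
    using seg_factorisation[OF assms(1) pt assms(4)] by metis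
  have "dG (seg G mu p t) = (q - p) + (t - q)"
    using h(8) assms by (simp add: le_fun_def fun_eq_iff)
  then obtain n1 n2 where f: "n1 \<in> MG" "n2 \<in> MG" "sG n1 = rG n2" "cG n1 n2 = seg G mu p t"
    "dG n1 = q - p" "dG n2 = t - q"
    using factorisation[OF h(3)] by metis
  have r1: "rG n1 = rG (seg G mu p t)" and s2: "sG n2 = rG be"
    using f h rg_cp sr_cp by metis+
  have mu: "mu = cG (cG al n1) (cG n2 be)"
    using h f r1 s2 cp_assoc[of al "seg G mu p t" be] cp_assoc[of n1 n2 be]
      cp_assoc[of al n1 "cG n2 be"] by (simp add: cp_mor rg_cp)
  have "seg G mu p q = n1"
    using h f r1 s2 mu assms by (intro seg_eqI[of al _ "cG n2 be"])
      (simp_all add: cp_mor rg_cp le_fun_def fun_eq_iff)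
  moreover have "seg G mu q t = n2"
    using h f r1 s2 mu assms cp_assoc[of "cG al n1" n2 be]
    by (intro seg_eqI[of "cG al n1" _ be]) (simp_all add: cp_mor sr_cp dg_cp le_fun_def fun_eq_iff)
  ultimately show "sG (seg G mu p q) = rG (seg G mu q t)"
    and "cG (seg G mu p q) (seg G mu q t) = seg G mu p t"
    using f by simp_all
qed

lemma seg_empty: "mu \<in> MG \<Longrightarrow> p \<le> dG mu \<Longrightarrow> seg G mu p p = iG (rG (seg G mu p p))"
  using degree_zero_id seg_mor dg_seg by simp

lemma rg_seg_zero:
  assumes "mu \<in> MG" "q \<le> dG mu"
  shows "rG (seg G mu 0 q) = rG mu"
proof -
  obtain al be where h: "al \<in> MG" "be \<in> MG" "seg G mu 0 q \<in> MG"
    "sG al = rG (seg G mu 0 q)" "sG (seg G mu 0 q) = rG be"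
    "cG (cG al (seg G mu 0 q)) be = mu" "dG al = 0"
    using seg_factorisation[OF assms(1) zero_le_fun assms(2)] by metis
  have "sG al = rG al"
    using degree_zero_id[OF h(1,7)] h(1) rg_obj sr_id by metis
  moreover have "rG mu = rG al"
    using h by (metis cp_mor rg_cp sr_cp)
  ultimately show ?thesis
    using h(4) by simp
qed

section \<open>Graph morphisms, shifts and concatenation\<close>

abbreviation has_edge :: "'v \<Rightarrow> 'k \<Rightarrow> bool" where
  "has_edge v i \<equiv> \<exists>l\<in>MG. rG l = v \<and> dG l = e_vec i"

lemma gm_mor: "is_gm G (m,x) \<Longrightarrow> p \<le> q \<Longrightarrow> le_en q m \<Longrightarrow> x p q \<in> MG"
  and dg_gm: "is_gm G (m,x) \<Longrightarrow> p \<le> q \<Longrightarrow> le_en q m \<Longrightarrow> dG (x p q) = q - p"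
  and gm_id: "is_gm G (m,x) \<Longrightarrow> le_en p m \<Longrightarrow> x p p = iG (rG (x p p))"
  unfolding is_gm_def by auto

lemma gm_sr_rg: "is_gm G (m,x) \<Longrightarrow> p \<le> q \<Longrightarrow> q \<le> t \<Longrightarrow> le_en t m \<Longrightarrow> sG (x p q) = rG (x q t)"
  and gm_cp: "is_gm G (m,x) \<Longrightarrow> p \<le> q \<Longrightarrow> q \<le> t \<Longrightarrow> le_en t m \<Longrightarrow> cG (x p q) (x q t) = x p t"
  unfolding is_gm_def by blast+

lemma rg_gm:
  assumes "is_gm G (m,x)" "p \<le> q" "le_en q m"
  shows "rG (x p q) = vtx G x p"
proof -
  have "le_en p m"
    using assms le_en_trans by blast
  then have "rG (cG (x p p) (x p q)) = rG (x p p)"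
    using assms by (simp add: rg_cp gm_mor gm_sr_rg)
  then show ?thesis
    using gm_cp[OF assms(1) order_refl assms(2,3)] unfolding vtx_def by simp
qed

lemma sr_gm: "is_gm G (m,x) \<Longrightarrow> p \<le> q \<Longrightarrow> le_en q m \<Longrightarrow> sG (x p q) = vtx G x q"
  using gm_sr_rg[of m x p q q] unfolding vtx_def by simp

lemma vtx_gm_obj: "is_gm G (m,x) \<Longrightarrow> le_en p m \<Longrightarrow> vtx G x p \<in> OG"
  unfolding vtx_def using gm_mor rg_obj by blast

lemma shift_pair: "shift (m,x) a = (\<lambda>i. m i - enat (a i), \<lambda>p q. x (p + a) (q + a))"
  by (simp add: shift_def)

lemma le_en_shift: "le_en a m \<Longrightarrow> le_en q (\<lambda>i. m i - enat (a i)) = le_en (q + a) m"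
  unfolding le_en_def using enat_le_diff_iff by simp

lemma is_gm_shift:
  assumes g: "is_gm G (m,x)" and a: "le_en a m"
  shows "is_gm G (shift (m,x) a)"
  unfolding shift_pair is_gm_def prod.case
proof (intro conjI allI impI)
  fix p q :: "'k \<Rightarrow> nat"
  assume "p \<le> q \<and> le_en q (\<lambda>i. m i - enat (a i))"
  then have "p + a \<le> q + a" "le_en (q + a) m"
    using le_en_shift[OF a] by (auto simp: le_fun_def)
  then show "x (p + a) (q + a) \<in> MG" "dG (x (p + a) (q + a)) = q - p"
    using gm_mor[OF g] dg_gm[OF g] by (auto simp: fun_eq_iff)
next
  fix p :: "'k \<Rightarrow> nat"
  assume "le_en p (\<lambda>i. m i - enat (a i))"
  then show "x (p + a) (p + a) = iG (rG (x (p + a) (p + a)))"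
    using gm_id[OF g] le_en_shift[OF a] by blast
next
  fix p q t :: "'k \<Rightarrow> nat"
  assume "p \<le> q \<and> q \<le> t \<and> le_en t (\<lambda>i. m i - enat (a i))"
  then have "p + a \<le> q + a" "q + a \<le> t + a" "le_en (t + a) m"
    using le_en_shift[OF a] by (auto simp: le_fun_def)
  then show "sG (x (p + a) (q + a)) = rG (x (q + a) (t + a))"
    "cG (x (p + a) (q + a)) (x (q + a) (t + a)) = x (p + a) (t + a)"
    using gm_sr_rg[OF g] gm_cp[OF g] by auto
qed

lemma is_bp_shift:
  assumes g: "is_bp G (m,x)" and a: "le_en a m"
  shows "is_bp G (shift (m,x) a)"
proof -
  obtain nx where nx: "le_en nx m"
    "\<And>p i. nx \<le> p \<Longrightarrow> le_en p m \<Longrightarrow> enat (p i) = m i \<Longrightarrow> \<not> has_edge (vtx G x p) i"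
    using g unfolding is_bp_def by auto
  have "le_en (sup nx a) m"
    using nx(1) a unfolding le_en_def by (simp add: sup_nat_def max_def)
  moreover have "nx - a + a = sup nx a"
    by (simp add: fun_eq_iff sup_nat_def max_def)
  ultimately have "le_en (nx - a) (\<lambda>i. m i - enat (a i))"
    using le_en_shift[OF a] by simp
  moreover have "\<not> has_edge (vtx G (\<lambda>p q. x (p + a) (q + a)) p) i"
    if "nx - a \<le> p" "le_en p (\<lambda>i. m i - enat (a i))" "enat (p i) = m i - enat (a i)" for p i
  proof -
    have "nx \<le> p + a"
      using that(1) by (simp add: le_fun_def le_diff_conv)
    moreover have "enat ((p + a) i) = m i"
      using that(3) a enat_eq_diff_iff unfolding le_en_def by simp
    ultimately show ?thesis
      using nx(2) that(2) le_en_shift[OF a] unfolding vtx_def by blast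
  qed
  ultimately show ?thesis
    using is_gm_shift[of m x a] g a unfolding is_bp_def shift_pair by auto
qed


lemma cat_pair:
  "cat G l (m,x) = (\<lambda>i. enat (dG l i) + m i, \<lambda>p q. seg G (cG l (x 0 (sup q (dG l) - dG l))) p q)"
  by (simp add: cat_def)

lemma cat_seg:
  assumes g: "is_gm G (m,x)" and l: "l \<in> MG" "sG l = vtx G x 0"
    and pq: "p \<le> q" "q \<le> dG l + Q" and Q: "le_en Q m"
  shows "snd (cat G l (m,x)) p q = seg G (cG l (x 0 Q)) p q"
proof -
  define Q0 where "Q0 = sup q (dG l) - dG l"
  have Q0Q: "Q0 \<le> Q"
  proof (rule le_funI)
    fix j
    show "Q0 j \<le> Q j"
      using le_funD[OF pq(2), of j] unfolding Q0_def by (simp add: sup_nat_def max_def) arith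
  qed
  have Q0m: "le_en Q0 m"
    using le_en_trans[OF Q0Q Q] .
  have x: "x 0 Q0 \<in> MG" "x Q0 Q \<in> MG" "sG (x 0 Q0) = rG (x Q0 Q)" "cG (x 0 Q0) (x Q0 Q) = x 0 Q"
    "rG (x 0 Q0) = sG l" "dG (x 0 Q0) = Q0"
    using gm_mor[OF g] gm_sr_rg[OF g] gm_cp[OF g] rg_gm[OF g] dg_gm[OF g] l Q0Q Q Q0m zero_le_fun
    by auto
  have "q \<le> dG l + Q0"
    unfolding Q0_def by (rule le_funI) (simp add: sup_nat_def max_def)
  then show ?thesis
    unfolding cat_pair snd_conv Q0_def[symmetric]
    using seg_cp_right[of "cG l (x 0 Q0)" "x Q0 Q" p q] pq(1) l x cp_assoc[of l "x 0 Q0" "x Q0 Q"]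
    by (simp add: cp_mor sr_cp dg_cp)
qed

lemma le_en_cat:
  assumes "le_en t (\<lambda>i. enat (D i) + m i)"
  obtains Q where "le_en Q m" "t \<le> D + Q"
proof
  have "enat (sup (t i) (D i) - D i) \<le> m i" for i
  proof -
    have "enat (t i) \<le> enat (D i) + m i"
      using assms unfolding le_en_def by simp
    then show ?thesis
      by (cases "m i") (auto simp: sup_nat_def max_def)
  qed
  then show "le_en (sup t D - D) m"
    unfolding le_en_def by simp
  show "t \<le> D + (sup t D - D)"
    by (simp add: le_fun_def sup_nat_def max_def)
qed

lemma cat_gm:
  assumes g: "is_gm G (m,x)" and l: "l \<in> MG" "sG l = vtx G x 0"
  shows "is_gm G (cat G l (m,x))"
proof -
  let ?z = "snd (cat G l (m,x))"
  let ?M = "\<lambda>i. enat (dG l i) + m i"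
  have cover: "\<exists>Q. le_en Q m \<and> t \<le> dG l + Q \<and> cG l (x 0 Q) \<in> MG \<and> dG (cG l (x 0 Q)) = dG l + Q"
    if t: "le_en t ?M" for t
  proof -
    obtain Q where Q: "le_en Q m" "t \<le> dG l + Q"
      using le_en_cat[OF t] .
    then show ?thesis
      using l gm_mor[OF g] rg_gm[OF g] dg_gm[OF g] zero_le_fun
      by (intro exI[of _ Q]) (simp add: cp_mor dg_cp)
  qed
  have "?z p q \<in> MG \<and> dG (?z p q) = q - p" if pq: "p \<le> q" "le_en q ?M" for p q
  proof -
    obtain Q where Q: "le_en Q m" "q \<le> dG l + Q" "cG l (x 0 Q) \<in> MG" "dG (cG l (x 0 Q)) = dG l + Q"
      using cover[OF pq(2)] by blast
    then show ?thesis
      using cat_seg[OF g l pq(1) Q(2,1)] seg_mor[OF Q(3) pq(1)] dg_seg[OF Q(3) pq(1)] by simp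
  qed
  moreover have "?z p p = iG (rG (?z p p))" if p: "le_en p ?M" for p
  proof -
    obtain Q where Q: "le_en Q m" "p \<le> dG l + Q" "cG l (x 0 Q) \<in> MG" "dG (cG l (x 0 Q)) = dG l + Q"
      using cover[OF p] by blast
    then show ?thesis
      using cat_seg[OF g l order_refl Q(2,1)] seg_empty[OF Q(3)] by simp
  qed
  moreover have "sG (?z p q) = rG (?z q t) \<and> cG (?z p q) (?z q t) = ?z p t"
    if pqt: "p \<le> q" "q \<le> t" "le_en t ?M" for p q t
  proof -
    obtain Q where Q: "le_en Q m" "t \<le> dG l + Q" "cG l (x 0 Q) \<in> MG" "dG (cG l (x 0 Q)) = dG l + Q"
      using cover[OF pqt(3)] by blast
    moreover have "q \<le> dG l + Q" "p \<le> t"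
      using pqt Q(2) order_trans by blast+
    ultimately have "?z p q = seg G (cG l (x 0 Q)) p q" "?z q t = seg G (cG l (x 0 Q)) q t"
      "?z p t = seg G (cG l (x 0 Q)) p t"
      using cat_seg[OF g l] pqt by simp_all
    then show ?thesis
      using seg_cp_seg[OF Q(3) pqt(1,2)] Q(2,4) by simp
  qed
  ultimately show ?thesis
    unfolding is_gm_def cat_pair prod.case snd_conv by blast
qed

lemma cat_bp:
  assumes g: "is_bp G (m,x)" and l: "l \<in> MG" "sG l = vtx G x 0"
  shows "is_bp G (cat G l (m,x))"
proof -
  have gm: "is_gm G (m,x)"
    using g unfolding is_bp_def by simp
  obtain nx where nx: "le_en nx m"
    "\<And>p i. nx \<le> p \<Longrightarrow> le_en p m \<Longrightarrow> enat (p i) = m i \<Longrightarrow> \<not> has_edge (vtx G x p) i"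
    using g unfolding is_bp_def by auto
  let ?z = "snd (cat G l (m,x))"
  let ?M = "\<lambda>i. enat (dG l i) + m i"
  have "le_en (dG l + nx) ?M"
    using nx(1) unfolding le_en_def by (simp add: enat_add_le_add_iff)
  moreover have "\<not> has_edge (vtx G ?z p) i"
    if p: "dG l + nx \<le> p" "le_en p ?M" "enat (p i) = ?M i" for p i
  proof -
    define P where "P = p - dG l"
    have pP: "p = dG l + P"
      using p(1) unfolding P_def by (simp add: le_fun_def fun_eq_iff) (metis add_leE le_add_diff_inverse)
    have P: "nx \<le> P" "le_en P m" "enat (P i) = m i"
      using p unfolding pP le_en_def le_fun_def by (simp_all add: enat_add_le_add_iff enat_add_eq_add_iff)
    have x: "x 0 P \<in> MG" "rG (x 0 P) = sG l" "sG (x 0 P) = vtx G x P" "dG (x 0 P) = P"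
      using gm_mor[OF gm] rg_gm[OF gm] sr_gm[OF gm] dg_gm[OF gm] zero_le_fun P(2) l(2) by auto
    then have "?z p p = iG (vtx G x P)"
      using cat_seg[OF gm l order_refl _ P(2), of p] seg_end[of "cG l (x 0 P)"] l pP
      by (simp add: cp_mor sr_cp dg_cp)
    then have "vtx G ?z p = vtx G x P"
      using rg_id vtx_gm_obj[OF gm P(2)] unfolding vtx_def by simp
    then show ?thesis
      using nx(2) P by simp
  qed
  ultimately show ?thesis
    using cat_gm[OF gm l] unfolding is_bp_def cat_pair prod.case snd_conv by blast
qed

lemma cat_seg_after_prefix:
  assumes g: "is_gm G (m,x)" and ab: "al \<in> MG" "be \<in> MG" "sG al = rG be" "sG be = vtx G x 0"
    and D: "le_en D m"
  shows "snd (cat G (cG al be) (m,x)) (dG al) (dG al + dG be + D) = cG be (x 0 D)"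
proof -
  have x: "x 0 D \<in> MG" "rG (x 0 D) = sG be" "dG (x 0 D) = D"
    using gm_mor[OF g] rg_gm[OF g] dg_gm[OF g] zero_le_fun D ab(4) by auto
  have "snd (cat G (cG al be) (m,x)) (dG al) (dG al + dG be + D)
      = seg G (cG (cG al be) (x 0 D)) (dG al) (dG al + dG be + D)"
    using cat_seg[OF g, of "cG al be" "dG al" "dG al + dG be + D" D] ab D
    by (simp add: cp_mor sr_cp dg_cp le_add_fun add.assoc)
  also have "\<dots> = cG be (x 0 D)"
  proof (rule seg_eqI[of al _ "iG (sG (cG be (x 0 D)))"])
    show "cG (cG al (cG be (x 0 D))) (iG (sG (cG be (x 0 D)))) = cG (cG al be) (x 0 D)"
      using ab x cp_assoc[of al be "x 0 D"] cp_id[of "cG al (cG be (x 0 D))"]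
      by (simp add: cp_mor rg_cp sr_cp)
  qed (use ab x in \<open>simp_all add: cp_mor rg_cp sr_cp dg_cp sr_obj id_mor rg_id add.assoc\<close>)
  finally show ?thesis .
qed

lemma cat_shift:
  assumes bp: "is_bp G (m, y)" and P: "le_en P m" and l: "l \<in> MG" "sG l = vtx G y P"
  shows "is_bp G (cat G l (shift (m, y) P))"
    and "fst (cat G l (shift (m, y) P)) = (\<lambda>i. enat (dG l i) + (m i - enat (P i)))"
proof -
  have "sG l = vtx G (\<lambda>s t. y (s + P) (t + P)) 0"
    using l(2) by (simp add: vtx_def)
  then show "is_bp G (cat G l (shift (m, y) P))"
    using cat_bp[OF _ l(1)] is_bp_shift[OF bp P] unfolding shift_pair by blast
  show "fst (cat G l (shift (m, y) P)) = (\<lambda>i. enat (dG l i) + (m i - enat (P i)))"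
    by (simp add: shift_pair cat_pair)
qed

lemma cat_shift_seg:
  assumes gm: "is_gm G (m, y)" and PQ: "P \<le> Q" "le_en Q m"
    and ab: "al \<in> MG" "be \<in> MG" "sG al = rG be" "sG be = vtx G y P"
  shows "snd (cat G (cG al be) (shift (m, y) P)) (dG al) (dG al + dG be + (Q - P)) = cG be (y P Q)"
proof -
  have P: "le_en P m"
    using le_en_trans[OF PQ] .
  have QP: "Q - P + P = Q"
    using PQ(1) by (simp add: le_fun_def fun_eq_iff)
  then have "le_en (Q - P) (\<lambda>i. m i - enat (P i))"
    using le_en_shift[OF P] PQ(2) by simp
  moreover have "sG be = vtx G (\<lambda>s t. y (s + P) (t + P)) 0"
    using ab(4) by (simp add: vtx_def)
  ultimately show ?thesis
    using cat_seg_after_prefix[OF _ ab(1-3)] is_gm_shift[OF gm P] QP unfolding shift_pair by simp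
qed

section \<open>Keys\<close>

text \<open>A morphism key is \<open>Inl \<lambda>\<close> for a path \<open>\<lambda>\<close> of the original graph or
  \<open>Inr (\<mu>, f, n)\<close> for a class with inner part \<open>\<mu>\<close>, range offset f and degree n;
  a vertex key is \<open>Inl v\<close> or \<open>Inr (w, f)\<close> with \<open>f \<noteq> 0\<close>.\<close>

fun key_rg :: "('a, 'k) mkey \<Rightarrow> ('v, 'k) okey" where
  "key_rg (Inl l) = Inl (rG l)"
| "key_rg (Inr (mu, f, n)) = (if f = 0 then Inl (rG mu) else Inr (rG mu, f))"

fun key_sr :: "('a, 'k) mkey \<Rightarrow> ('v, 'k) okey" where
  "key_sr (Inl l) = Inl (sG l)"
| "key_sr (Inr (mu, f, n)) = Inr (sG mu, f + n - dG mu)"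

fun key_dg :: "('a, 'k) mkey \<Rightarrow> 'k \<Rightarrow> nat" where
  "key_dg (Inl l) = dG l"
| "key_dg (Inr (mu, f, n)) = n"

fun key_id :: "('v, 'k) okey \<Rightarrow> ('a, 'k) mkey" where
  "key_id (Inl v) = Inl (iG v)"
| "key_id (Inr (w, f)) = Inr (iG w, f, 0)"

fun key_cp :: "('a, 'k) mkey \<Rightarrow> ('a, 'k) mkey \<Rightarrow> ('a, 'k) mkey" where
  "key_cp (Inl l) (Inl l') = Inl (cG l l')"
| "key_cp (Inl l) (Inr (mu, f, n)) = Inr (cG l mu, 0, dG l + n)"
| "key_cp (Inr (mu, f, n)) (Inr (mu', f', n')) = Inr (cG mu mu', f, n + n')"
| "key_cp (Inr t) (Inl l) = undefined"

definition wf_pkey :: "'a \<times> ('k \<Rightarrow> nat) \<times> ('k \<Rightarrow> nat) \<Rightarrow> bool" where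
  "wf_pkey t = (case t of (mu, f, n) \<Rightarrow> mu \<in> MG \<and> dG mu \<le> n \<and> (\<forall>i. f i \<noteq> 0 \<longrightarrow> dG mu i = 0))"

definition wf_mkey :: "('a, 'k) mkey \<Rightarrow> bool" where
  "wf_mkey X = (case X of Inl l \<Rightarrow> l \<in> MG | Inr t \<Rightarrow> wf_pkey t)"

definition wf_okey :: "('v, 'k) okey \<Rightarrow> bool" where
  "wf_okey X = (case X of Inl v \<Rightarrow> v \<in> OG | Inr (w, f) \<Rightarrow> w \<in> OG \<and> f \<noteq> 0)"

lemma wf_mkeyE:
  assumes "wf_mkey X"
  obtains (path) l where "X = Inl l" "l \<in> MG"
  | (triple) mu f n where "X = Inr (mu, f, n)" "wf_pkey (mu, f, n)"
  using assms unfolding wf_mkey_def by (cases X) auto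

lemma key_composable_cases:
  assumes "key_sr X = key_rg Y" "wf_mkey X" "wf_mkey Y"
  obtains (path_path) l l' where "X = Inl l" "Y = Inl l'" "l \<in> MG" "l' \<in> MG" "sG l = rG l'"
  | (path_class) l mu n where "X = Inl l" "Y = Inr (mu, 0, n)" "l \<in> MG" "wf_pkey (mu, 0, n)"
      "sG l = rG mu"
  | (class_class) mu f n mu' f' n' where "X = Inr (mu, f, n)" "Y = Inr (mu', f', n')"
      "wf_pkey (mu, f, n)" "wf_pkey (mu', f', n')" "sG mu = rG mu'" "f' = f + n - dG mu" "f' \<noteq> 0"
  using assms(2,3)
proof (cases rule: wf_mkeyE[case_product wf_mkeyE])
  case (triple_triple mu f n mu' f' n')
  then show ?thesis
    using assms(1) that(3) by (simp split: if_splits)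
qed (use assms(1) that in \<open>auto split: if_splits\<close>)

lemma key_rg_cp: "key_sr X = key_rg Y \<Longrightarrow> wf_mkey X \<Longrightarrow> wf_mkey Y \<Longrightarrow> key_rg (key_cp X Y) = key_rg X"
  by (erule (2) key_composable_cases) (auto simp: rg_cp wf_pkey_def)

lemma key_dg_cp:
  "key_sr X = key_rg Y \<Longrightarrow> wf_mkey X \<Longrightarrow> wf_mkey Y \<Longrightarrow> key_dg (key_cp X Y) = key_dg X + key_dg Y"
  by (erule (2) key_composable_cases) (auto simp: dg_cp add.assoc wf_pkey_def)

lemma key_sr_cp: "key_sr X = key_rg Y \<Longrightarrow> wf_mkey X \<Longrightarrow> wf_mkey Y \<Longrightarrow> key_sr (key_cp X Y) = key_sr Y"
proof (erule (2) key_composable_cases)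
  fix l mu n
  assume "X = Inl l" "Y = Inr (mu, 0, n)" "l \<in> MG" "wf_pkey (mu, 0, n)" "sG l = rG mu"
  then show ?thesis
    by (auto simp: sr_cp dg_cp fun_eq_iff wf_pkey_def)
next
  fix mu f n mu' f' n'
  assume h: "X = Inr (mu, f, n)" "Y = Inr (mu', f', n')" "wf_pkey (mu, f, n)" "wf_pkey (mu', f', n')"
    "sG mu = rG mu'" "f' = f + n - dG mu"
  then have mu: "dG mu \<le> n" "mu \<in> MG" "mu' \<in> MG"
    by (auto simp: wf_pkey_def)
  have "f + (n + n') - dG (cG mu mu') = f' + n' - dG mu'"
  proof
    fix i
    have "dG mu i \<le> n i"
      using mu(1) by (simp add: le_fun_def)
    then show "(f + (n + n') - dG (cG mu mu')) i = (f' + n' - dG mu') i"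
      using h mu dg_cp by simp
  qed
  then show ?thesis
    using h mu by (simp add: sr_cp)
qed (simp add: sr_cp)

lemma key_cp_assoc:
  assumes "key_sr X = key_rg Y" "key_sr Y = key_rg Z" "wf_mkey X" "wf_mkey Y" "wf_mkey Z"
  shows "key_cp (key_cp X Y) Z = key_cp X (key_cp Y Z)"
  using assms(1,3,4)
proof (cases rule: key_composable_cases)
  case (path_path l l')
  from assms(2,4,5) show ?thesis
    using path_path by (cases rule: key_composable_cases) (auto simp: cp_assoc dg_cp add.assoc wf_pkey_def)
next
  case (path_class l mu n)
  from assms(2,4,5) show ?thesis
    using path_class by (cases rule: key_composable_cases) (auto simp: cp_assoc add.assoc wf_pkey_def)
next
  case (class_class mu f n mu' f' n')
  from assms(2,4,5) show ?thesis
    using class_class by (cases rule: key_composable_cases) (auto simp: cp_assoc add.assoc wf_pkey_def)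
qed

lemma key_id_cp: "wf_mkey X \<Longrightarrow> key_cp (key_id (key_rg X)) X = X"
  by (erule wf_mkeyE) (auto simp: id_cp rg_obj dg_id wf_pkey_def)

lemma key_cp_id: "wf_mkey X \<Longrightarrow> key_cp X (key_id (key_sr X)) = X"
  by (erule wf_mkeyE) (auto simp: cp_id wf_pkey_def)

lemma key_id_props:
  assumes "wf_okey v"
  shows "key_rg (key_id v) = v" "key_sr (key_id v) = v" "key_dg (key_id v) = 0"
  using assms by (cases v; auto simp: wf_okey_def rg_id sr_id dg_id)+

text \<open>This is what makes factorisations of keys unique.\<close>

lemma key_first_factor_degree:
  assumes "wf_pkey (mu1, f1, n1)" "wf_pkey (mu2, f2, n2)" "sG mu1 = rG mu2" "f2 = f1 + n1 - dG mu1"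
  shows "dG mu1 = inf (dG (cG mu1 mu2)) n1"
proof
  fix i
  have "mu1 \<in> MG" "mu2 \<in> MG" "dG mu1 i \<le> n1 i" "f2 i \<noteq> 0 \<longrightarrow> dG mu2 i = 0"
    using assms(1,2) by (auto simp: le_fun_def wf_pkey_def)
  then show "dG mu1 i = inf (dG (cG mu1 mu2)) n1 i"
    using assms(3,4) by (cases "dG mu1 i < n1 i") (auto simp: dg_cp inf_nat_def)
qed

lemma key_class_class_offset:
  assumes "wf_pkey (mu1, f1, n1)" "wf_pkey (mu2, f2, n2)" "sG mu1 = rG mu2"
    and "f2 = f1 + n1 - dG mu1" "f2 \<noteq> 0"
    and "l \<in> MG" "mu \<in> MG" "sG l = rG mu" "cG l mu = cG mu1 mu2" "dG l = n1"
  shows "f1 \<noteq> 0"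
proof
  assume "f1 = 0"
  have "dG mu1 = inf (dG l + dG mu) (dG l)"
    using key_first_factor_degree[OF assms(1-4)] dg_cp[OF assms(6-8)] assms(10)
    unfolding assms(9)[symmetric] by simp
  then have "dG mu1 = n1"
    using assms(10) by (simp add: fun_eq_iff inf_nat_def)
  then show False
    using assms(4,5) \<open>f1 = 0\<close> by simp
qed

lemma key_factorisation_unique:
  assumes FH: "key_sr F = key_rg H" "wf_mkey F" "wf_mkey H"
    and FH': "key_sr F' = key_rg H'" "wf_mkey F'" "wf_mkey H'"
    and cp: "key_cp F H = key_cp F' H'" and dg: "key_dg F = key_dg F'"
  shows "F = F' \<and> H = H'"
  using FH
proof (cases rule: key_composable_cases)
  case (path_path l1 l2)
  note F = this
  from FH' show ?thesis
  proof (cases rule: key_composable_cases)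
    case (path_path l1' l2')
    then show ?thesis
      using F cp dg factorisation_unique[of l1 l2 l1' l2'] by simp
  qed (use F cp in simp_all)
next
  case (path_class l mu n)
  note F = this
  from FH' show ?thesis
  proof (cases rule: key_composable_cases)
    case (path_class l' mu' n')
    have "mu \<in> MG" "mu' \<in> MG"
      using F path_class by (simp_all add: wf_pkey_def)
    then show ?thesis
      using F path_class cp dg factorisation_unique[of l mu l' mu'] by simp
  next
    case (class_class mu1 f1 n1 mu2 f2 n2)
    have "mu \<in> MG"
      using F by (simp add: wf_pkey_def)
    moreover have "cG l mu = cG mu1 mu2" "f1 = 0" "dG l = n1"
      using F class_class cp dg by simp_all
    ultimately show ?thesis
      using F class_class key_class_class_offset[of mu1 f1 n1 mu2 f2 n2 l mu] by blast
  qed (use F cp in simp_all)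
next
  case (class_class mu1 f1 n1 mu2 f2 n2)
  note F = this
  from FH' show ?thesis
  proof (cases rule: key_composable_cases)
    case (path_class l mu n)
    have "mu \<in> MG"
      using path_class by (simp add: wf_pkey_def)
    moreover have "cG l mu = cG mu1 mu2" "f1 = 0" "dG l = n1"
      using F path_class cp dg by simp_all
    ultimately show ?thesis
      using F path_class key_class_class_offset[of mu1 f1 n1 mu2 f2 n2 l mu] by blast
  next
    case (class_class nu1 g1 m1 nu2 g2 m2)
    then have "dG mu1 = dG nu1"
      using F cp dg key_first_factor_degree[of mu1 f1 n1 mu2 f2 n2]
        key_first_factor_degree[of nu1 g1 m1 nu2 g2 m2] by simp
    moreover have "mu1 \<in> MG" "mu2 \<in> MG" "nu1 \<in> MG" "nu2 \<in> MG"
      using F class_class by (simp_all add: wf_pkey_def)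
    ultimately show ?thesis
      using class_class F cp dg factorisation_unique[of mu1 mu2 nu1 nu2] by simp
  qed (use F cp in simp_all)
qed


definition pkey :: "('a, 'k) gmor \<times> ('k \<Rightarrow> nat) \<times> ('k \<Rightarrow> nat) \<Rightarrow> 'a \<times> ('k \<Rightarrow> nat) \<times> ('k \<Rightarrow> nat)" where
  "pkey u = (case u of ((m, x), a, b) \<Rightarrow> (x (meet_en a m) (meet_en b m), a - meet_en a m, b - a))"

definition vkey :: "('a, 'k) gmor \<times> ('k \<Rightarrow> nat) \<Rightarrow> 'v \<times> ('k \<Rightarrow> nat)" where
  "vkey u = (case u of ((m, x), a) \<Rightarrow> (vtx G x (meet_en a m), a - meet_en a m))"

lemma pkey_simp: "pkey ((m, x), a, b) = (x (meet_en a m) (meet_en b m), a - meet_en a m, b - a)"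
  by (simp add: pkey_def)

lemma vkey_simp: "vkey ((m, x), a) = (vtx G x (meet_en a m), a - meet_en a m)"
  by (simp add: vkey_def)

lemma Pcls_eq: "Pcls G u = {w \<in> P_set G. pkey w = pkey u}"
  unfolding Pcls_def P_rel_def pkey_def by (auto split: prod.splits)

lemma Vcls_eq: "Vcls G u = {w \<in> V_set G. vkey w = vkey u}"
  unfolding Vcls_def V_rel_def vkey_def by (auto split: prod.splits)

lemma rep_Pcls: "u \<in> P_set G \<Longrightarrow> rep (Pcls G u) \<in> P_set G \<and> pkey (rep (Pcls G u)) = pkey u"
  unfolding rep_def by (rule someI2[of _ u]) (simp_all add: Pcls_eq)

lemma rep_Vcls: "u \<in> V_set G \<Longrightarrow> rep (Vcls G u) \<in> V_set G \<and> vkey (rep (Vcls G u)) = vkey u"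
  unfolding rep_def by (rule someI2[of _ u]) (simp_all add: Vcls_eq)

lemma Vcls_eq_iff:
  assumes "u \<in> V_set G"
  shows "Vcls G u = Vcls G w \<longleftrightarrow> vkey u = vkey w"
proof
  assume "Vcls G u = Vcls G w"
  moreover have "u \<in> Vcls G u"
    using assms by (simp add: Vcls_eq)
  ultimately have "u \<in> Vcls G w"
    by simp
  then show "vkey u = vkey w"
    by (simp add: Vcls_eq)
qed (simp add: Vcls_eq)

lemma Ptilde_rep: "c \<in> Ptilde G \<Longrightarrow> rep c \<in> P_set G \<and> c = Pcls G (rep c)"
  unfolding Ptilde_def using rep_Pcls by (auto simp: Pcls_eq)

lemma Vtilde_rep: "c \<in> Vtilde G \<Longrightarrow> rep c \<in> V_set G \<and> c = Vcls G (rep c)"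
  unfolding Vtilde_def using rep_Vcls by (auto simp: Vcls_eq)

lemma inj_on_pkey_rep: "inj_on (\<lambda>c. pkey (rep c)) (Ptilde G)"
proof (rule inj_onI)
  fix c c'
  assume c: "c \<in> Ptilde G" "c' \<in> Ptilde G" "pkey (rep c) = pkey (rep c')"
  have "c = Pcls G (rep c)"
    using Ptilde_rep[OF c(1)] by blast
  also have "\<dots> = Pcls G (rep c')"
    unfolding Pcls_eq using c(3) by simp
  also have "\<dots> = c'"
    using Ptilde_rep[OF c(2)] by blast
  finally show "c = c'" .
qed

lemma inj_on_vkey_rep: "inj_on (\<lambda>c. vkey (rep c)) (Vtilde G)"
proof (rule inj_onI)
  fix c c'
  assume c: "c \<in> Vtilde G" "c' \<in> Vtilde G" "vkey (rep c) = vkey (rep c')"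
  have "c = Vcls G (rep c)"
    using Vtilde_rep[OF c(1)] by blast
  also have "\<dots> = Vcls G (rep c')"
    unfolding Vcls_eq using c(3) by simp
  also have "\<dots> = c'"
    using Vtilde_rep[OF c(2)] by blast
  finally show "c = c'" .
qed

lemma P_setD: "((m, x), a, b) \<in> P_set G \<Longrightarrow> is_gm G (m, x) \<and> is_bp G (m, x) \<and> a \<le> b \<and> \<not> le_en b m"
  by (simp add: P_set_def is_bp_def)

lemma V_setD: "((m, x), a) \<in> V_set G \<Longrightarrow> is_gm G (m, x) \<and> is_bp G (m, x) \<and> \<not> le_en a m"
  by (simp add: V_set_def is_bp_def)

lemma wf_pkey_pkey:
  assumes "((m, x), a, b) \<in> P_set G"
  shows "wf_pkey (pkey ((m, x), a, b))"
proof -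
  have gm: "is_gm G (m, x)" and ab: "a \<le> b"
    using P_setD[OF assms] by auto
  have "meet_en a m \<le> meet_en b m"
    using meet_en_mono[OF ab] .
  then have "x (meet_en a m) (meet_en b m) \<in> MG"
    "dG (x (meet_en a m) (meet_en b m)) = meet_en b m - meet_en a m"
    using gm_mor[OF gm] dg_gm[OF gm] le_en_meet_en by blast+
  moreover have "meet_en b m - meet_en a m \<le> b - a"
    using ab by (simp add: le_fun_def meet_en_apply meet_enat_diff_le)
  moreover have "(meet_en b m - meet_en a m) i = 0" if "(a - meet_en a m) i \<noteq> 0" for i
    using ab that by (simp add: le_fun_def meet_en_apply meet_enat_diff_beyond)
  ultimately show ?thesis
    unfolding wf_pkey_def pkey_simp by simp
qed

lemma wf_okey_vkey:
  assumes "((m, x), a) \<in> V_set G"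
  shows "wf_okey (Inr (vkey ((m, x), a)))"
proof -
  have "is_gm G (m, x)" "\<not> le_en a m"
    using V_setD[OF assms] by auto
  then show ?thesis
    unfolding wf_okey_def vkey_simp
    using vtx_gm_obj[of m x "meet_en a m"] le_en_iff_diff_meet_en[of a m] by (simp add: le_en_meet_en)
qed

lemma key_rg_pkey:
  assumes "((m, x), a, b) \<in> P_set G"
  shows "key_rg (Inr (pkey ((m, x), a, b))) =
    (if le_en a m then Inl (vtx G x a) else Inr (vkey ((m, x), a)))"
proof -
  have gm: "is_gm G (m, x)" and "a \<le> b"
    using P_setD[OF assms] by auto
  then have rg: "rG (x (meet_en a m) (meet_en b m)) = vtx G x (meet_en a m)"
    using rg_gm meet_en_mono le_en_meet_en by blast
  show ?thesis
  proof (cases "le_en a m")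
    case True
    then show ?thesis
      using rg meet_en_eq[OF True] by (simp add: pkey_simp)
  next
    case False
    then show ?thesis
      using rg le_en_iff_diff_meet_en[of a m] by (simp add: pkey_simp vkey_simp)
  qed
qed

lemma key_sr_pkey:
  assumes "((m, x), a, b) \<in> P_set G"
  shows "key_sr (Inr (pkey ((m, x), a, b))) = Inr (vkey ((m, x), b))"
proof -
  have gm: "is_gm G (m, x)" and ab: "a \<le> b"
    using P_setD[OF assms] by auto
  then have "sG (x (meet_en a m) (meet_en b m)) = vtx G x (meet_en b m)"
    "dG (x (meet_en a m) (meet_en b m)) = meet_en b m - meet_en a m"
    using sr_gm dg_gm meet_en_mono le_en_meet_en by blast+
  moreover have "b - meet_en b m = a - meet_en a m + (b - a) - (meet_en b m - meet_en a m)"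
  proof
    fix i
    show "(b - meet_en b m) i = (a - meet_en a m + (b - a) - (meet_en b m - meet_en a m)) i"
      using ab meet_enat_offset[of "a i" "b i" "m i"] by (simp add: le_fun_def meet_en_apply)
  qed
  ultimately show ?thesis
    by (simp add: pkey_simp vkey_simp)
qed


lemma cat_shift_path_P_set:
  assumes l: "l \<in> MG" and u: "((m, x), a, b) \<in> P_set G"
    and am: "le_en a m" and sl: "sG l = vtx G x a"
  defines "u' \<equiv> (cat G l (shift (m, x) a), 0, dG l + b - a)"
  shows "u' \<in> P_set G" and "pkey u' = (cG l (x a (meet_en b m)), 0, dG l + (b - a))"
proof -
  have gm: "is_gm G (m, x)" and bp: "is_bp G (m, x)" and ab: "a \<le> b" and bm: "\<not> le_en b m"
    using P_setD[OF u] by auto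
  let ?z = "cat G l (shift (m, x) a)"
  note z = cat_shift[OF bp am l sl]
  have ai: "a i \<le> b i" and ami: "enat (a i) \<le> m i" for i
    using ab am by (simp_all add: le_fun_def le_en_def)
  have "\<not> le_en (dG l + b - a) (fst ?z)"
  proof -
    obtain i where "\<not> enat (b i) \<le> m i"
      using bm unfolding le_en_def by blast
    then show ?thesis
      using meet_enat_cp_path_class(2)[OF ai ami] unfolding z(2) le_en_def by auto
  qed
  then show "u' \<in> P_set G"
    unfolding u'_def P_set_def using z(1) by (simp add: zero_le_fun)
  have aB: "a \<le> meet_en b m"
    using meet_en_mono[OF ab, of m] meet_en_eq[OF am] by simp
  have "meet_en (dG l + b - a) (fst ?z) = dG l + (meet_en b m - a)"
  proof
    fix i
    have "a i \<le> meet_en b m i"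
      using aB by (simp add: le_fun_def)
    then show "meet_en (dG l + b - a) (fst ?z) i = (dG l + (meet_en b m - a)) i"
      using meet_enat_cp_path_class(1)[OF ai ami, of "dG l i"] unfolding z(2)
      by (simp add: meet_en_apply)
  qed
  moreover have "snd ?z 0 (dG l + (meet_en b m - a)) = cG l (x a (meet_en b m))"
    using cat_shift_seg[OF gm aB le_en_meet_en id_mor[OF rg_obj[OF l]] l(1) _ sl] l
    by (simp add: rg_obj sr_id rg_id id_cp dg_id)
  moreover have "dG l + b - a = dG l + (b - a)"
    using ab by (simp add: fun_eq_iff le_fun_def)
  ultimately show "pkey u' = (cG l (x a (meet_en b m)), 0, dG l + (b - a))"
    unfolding u'_def by (cases ?z) (simp add: pkey_simp meet_en_zero)
qed


lemma cat_shift_class_P_set: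
  assumes u: "((m, x), a, b) \<in> P_set G" and u': "((m', y), p, q) \<in> P_set G"
    and glue: "vkey ((m, x), b) = vkey ((m', y), p)"
  defines "A \<equiv> meet_en a m" and "B \<equiv> meet_en b m" and "P \<equiv> meet_en p m'" and "Q \<equiv> meet_en q m'"
  defines "u'' \<equiv> (cat G (x 0 B) (shift (m', y) P), a, b + q - p)"
  shows "u'' \<in> P_set G" and "pkey u'' = (cG (x A B) (y P Q), a - A, (b - a) + (q - p))"
proof -
  have gm: "is_gm G (m, x)" and ab: "a \<le> b" and bm: "\<not> le_en b m"
    using P_setD[OF u] by auto
  have gm': "is_gm G (m', y)" and bp': "is_bp G (m', y)" and pq: "p \<le> q"
    using P_setD[OF u'] by auto
  have Pm: "le_en P m'" and Bm: "le_en B m" and Qm: "le_en Q m'"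
    unfolding P_def B_def Q_def by (rule le_en_meet_en)+
  have AB: "A \<le> B" and PQ: "P \<le> Q"
    unfolding A_def B_def P_def Q_def using meet_en_mono ab pq by blast+
  have x: "x 0 A \<in> MG" "x A B \<in> MG" "x 0 B \<in> MG" "sG (x 0 A) = rG (x A B)"
    "cG (x 0 A) (x A B) = x 0 B" "dG (x 0 A) = A" "dG (x A B) = B - A" "dG (x 0 B) = B"
    using gm_mor[OF gm] gm_sr_rg[OF gm] gm_cp[OF gm] dg_gm[OF gm] le_en_trans[OF AB Bm] AB Bm
      zero_le_fun by auto
  have glue': "sG (x A B) = vtx G y P" "sG (x 0 B) = vtx G y P"
    using sr_gm[OF gm AB Bm] sr_gm[OF gm zero_le_fun Bm] glue
    unfolding vkey_simp B_def P_def by simp_all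
  let ?z = "cat G (x 0 B) (shift (m', y) P)"
  note z = cat_shift[OF bp' Pm x(3) glue'(2)]
  have fz: "fst ?z i = enat (meet_enat (b i) (m i)) + (m' i - enat (meet_enat (p i) (m' i)))" for i
    unfolding z(2) x(8) by (simp add: B_def P_def meet_en_apply)
  have ai: "a i \<le> b i" and pi: "p i \<le> q i"
    and oi: "b i - meet_enat (b i) (m i) = p i - meet_enat (p i) (m' i)" for i
    using ab pq glue unfolding vkey_simp
    by (simp_all add: le_fun_def meet_en_apply fun_eq_iff)
  have "\<not> le_en (b + q - p) (fst ?z)"
  proof -
    obtain i where "\<not> enat (b i) \<le> m i"
      using bm unfolding le_en_def by blast
    then show ?thesis
      using meet_enat_cp_class_class(3)[OF ai pi oi] fz unfolding le_en_def by auto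
  qed
  moreover have "a \<le> b + q - p"
    using ai pi by (simp add: le_fun_def) (metis add_diff_assoc le_add1 order_trans)
  ultimately show "u'' \<in> P_set G"
    unfolding u''_def P_set_def using z(1) by simp
  have "meet_en a (fst ?z) = A"
    unfolding A_def by (rule ext) (simp add: meet_en_apply fz meet_enat_cp_class_class(1)[OF ai pi oi])
  moreover have "meet_en (b + q - p) (fst ?z) = B + Q - P"
  proof
    fix i
    show "meet_en (b + q - p) (fst ?z) i = (B + Q - P) i"
      unfolding meet_en_apply fz using meet_enat_cp_class_class(2)[OF ai pi oi]
      by (simp add: B_def Q_def P_def meet_en_apply)
  qed
  moreover have "snd ?z A (B + Q - P) = cG (x A B) (y P Q)"
  proof -
    have "dG (x 0 A) + dG (x A B) + (Q - P) = B + Q - P"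
      unfolding x(6,7) using AB PQ by (simp add: le_fun_def fun_eq_iff)
    then show ?thesis
      using cat_shift_seg[OF gm' PQ Qm x(1,2,4) glue'(1)] unfolding x(5,6) by simp
  qed
  moreover have "b + q - p - a = (b - a) + (q - p)"
    using ai pi by (simp add: fun_eq_iff add.commute)
  ultimately show "pkey u'' = (cG (x A B) (y P Q), a - A, (b - a) + (q - p))"
    unfolding u''_def by (cases ?z) (simp add: pkey_simp)
qed


section \<open>The extension is a k-graph\<close>

abbreviation "E \<equiv> ext G"

lemma kobj_ext: "kobj E = Inl ` OG \<union> Inr ` Vtilde G"
  and kmor_ext: "kmor E = Inl ` MG \<union> Inr ` Ptilde G"
  by (simp_all add: ext_def)

lemma krg_ext_Inl: "krg E (Inl l) = Inl (rG l)"
  and ksr_ext_Inl: "ksr E (Inl l) = Inl (sG l)"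
  and kdg_ext_Inl: "kdg E (Inl l) = dG l"
  and kid_ext_Inl: "kid E (Inl v) = Inl (iG v)"
  and kcp_ext_Inl_Inl: "kcp E (Inl l) (Inl l') = Inl (cG l l')"
  by (simp_all add: ext_def)

lemma krg_ext_Inr: "rep c = ((m, x), a, b) \<Longrightarrow>
    krg E (Inr c) = (if le_en a m then Inl (vtx G x a) else Inr (Vcls G ((m, x), a)))"
  and ksr_ext_Inr: "rep c = ((m, x), a, b) \<Longrightarrow> ksr E (Inr c) = Inr (Vcls G ((m, x), b))"
  and kdg_ext_Inr: "rep c = ((m, x), a, b) \<Longrightarrow> kdg E (Inr c) = b - a"
  by (simp_all add: ext_def)

lemma kid_ext_Inr: "rep c = (y, a) \<Longrightarrow> kid E (Inr c) = Inr (Pcls G (y, a, a))"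
  by (simp add: ext_def)

lemma kcp_ext_Inl_Inr: "rep c = (y, a, b) \<Longrightarrow>
    kcp E (Inl l) (Inr c) = Inr (Pcls G (cat G l (shift y a), 0, dG l + b - a))"
  by (simp add: ext_def)

lemma kcp_ext_Inr_Inr: "rep c = ((m, x), a, b) \<Longrightarrow> rep c' = ((m', y), p, q) \<Longrightarrow>
    kcp E (Inr c) (Inr c') =
      Inr (Pcls G (cat G (x 0 (meet_en b m)) (shift (m', y) (meet_en p m')), a, b + q - p))"
  by (simp add: ext_def)

fun obj_key :: "'v + ('a, 'k) vcls \<Rightarrow> ('v, 'k) okey" where
  "obj_key (Inl v) = Inl v"
| "obj_key (Inr c) = Inr (vkey (rep c))"

fun mor_key :: "'a + ('a, 'k) pcls \<Rightarrow> ('a, 'k) mkey" where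
  "mor_key (Inl l) = Inl l"
| "mor_key (Inr c) = Inr (pkey (rep c))"

lemma kmor_extE:
  assumes "f \<in> kmor E"
  obtains (path) l where "f = Inl l" "l \<in> MG"
  | (pclass) c m x a b where "f = Inr c" "c \<in> Ptilde G" "rep c = ((m, x), a, b)"
      "((m, x), a, b) \<in> P_set G"
proof (cases f)
  case (Inl l)
  then show ?thesis
    using assms path by (auto simp: kmor_ext)
next
  case (Inr c)
  then have "c \<in> Ptilde G"
    using assms by (auto simp: kmor_ext)
  moreover obtain m x a b where "rep c = ((m, x), a, b)"
    by (metis prod.exhaust)
  ultimately show ?thesis
    using pclass[OF Inr] Ptilde_rep[of c, THEN conjunct1] by simp
qed

lemma kobj_extE:
  assumes "v \<in> kobj E"
  obtains (vertex) w where "v = Inl w" "w \<in> OG"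
  | (vclass) c m x a where "v = Inr c" "c \<in> Vtilde G" "rep c = ((m, x), a)"
      "((m, x), a) \<in> V_set G"
proof (cases v)
  case (Inl w)
  then show ?thesis
    using assms vertex by (auto simp: kobj_ext)
next
  case (Inr c)
  then have "c \<in> Vtilde G"
    using assms by (auto simp: kobj_ext)
  moreover obtain m x a where "rep c = ((m, x), a)"
    by (metis prod.exhaust)
  ultimately show ?thesis
    using vclass[OF Inr] Vtilde_rep[of c, THEN conjunct1] by simp
qed

lemma wf_mor_key: "f \<in> kmor E \<Longrightarrow> wf_mkey (mor_key f)"
  by (erule kmor_extE) (auto simp: wf_mkey_def wf_pkey_pkey)

lemma wf_obj_key: "v \<in> kobj E \<Longrightarrow> wf_okey (obj_key v)"
  by (erule kobj_extE) (simp_all add: wf_okey_vkey, simp add: wf_okey_def)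

lemma inj_on_mor_key: "inj_on mor_key (kmor E)"
proof (rule inj_onI)
  fix f g
  assume "f \<in> kmor E" "g \<in> kmor E" "mor_key f = mor_key g"
  then show "f = g"
    using inj_on_pkey_rep[THEN inj_onD] by (cases f; cases g) (auto simp: kmor_ext)
qed

lemma inj_on_obj_key: "inj_on obj_key (kobj E)"
proof (rule inj_onI)
  fix v w
  assume "v \<in> kobj E" "w \<in> kobj E" "obj_key v = obj_key w"
  then show "v = w"
    using inj_on_vkey_rep[THEN inj_onD] by (cases v; cases w) (auto simp: kobj_ext)
qed

lemma Pcls_kmor_ext: "u \<in> P_set G \<Longrightarrow> Inr (Pcls G u) \<in> kmor E"
  and mor_key_Pcls: "u \<in> P_set G \<Longrightarrow> mor_key (Inr (Pcls G u)) = Inr (pkey u)"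
  using rep_Pcls unfolding kmor_ext Ptilde_def by auto

lemma krg_ext_obj: "f \<in> kmor E \<Longrightarrow> krg E f \<in> kobj E"
proof (erule kmor_extE)
  fix c m x a b
  assume f: "f = Inr c" "rep c = ((m, x), a, b)" "((m, x), a, b) \<in> P_set G"
  have gm: "is_gm G (m, x)" and bp: "is_bp G (m, x)"
    using P_setD[OF f(3)] by auto
  show ?thesis
  proof (cases "le_en a m")
    case True
    then show ?thesis
      using vtx_gm_obj[OF gm True] unfolding f(1) krg_ext_Inr[OF f(2)] kobj_ext by simp
  next
    case False
    then have "((m, x), a) \<in> V_set G"
      using bp by (simp add: V_set_def)
    then show ?thesis
      using False unfolding f(1) krg_ext_Inr[OF f(2)] kobj_ext Vtilde_def by simp
  qed
qed (simp add: krg_ext_Inl kobj_ext rg_obj)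

lemma ksr_ext_obj: "f \<in> kmor E \<Longrightarrow> ksr E f \<in> kobj E"
proof (erule kmor_extE)
  fix c m x a b
  assume f: "f = Inr c" "rep c = ((m, x), a, b)" "((m, x), a, b) \<in> P_set G"
  then have "((m, x), b) \<in> V_set G"
    using P_setD[OF f(3)] unfolding V_set_def by simp
  then show ?thesis
    unfolding f(1) ksr_ext_Inr[OF f(2)] kobj_ext Vtilde_def by simp
qed (simp add: ksr_ext_Inl kobj_ext sr_obj)

lemma obj_key_krg: "f \<in> kmor E \<Longrightarrow> obj_key (krg E f) = key_rg (mor_key f)"
proof (erule kmor_extE)
  fix c m x a b
  assume f: "f = Inr c" "rep c = ((m, x), a, b)" "((m, x), a, b) \<in> P_set G"
  show ?thesis
  proof (cases "le_en a m")
    case False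
    then have "((m, x), a) \<in> V_set G"
      using P_setD[OF f(3)] unfolding V_set_def by simp
    then show ?thesis
      using f False key_rg_pkey[OF f(3)] rep_Vcls krg_ext_Inr[OF f(2)] by simp
  qed (use f key_rg_pkey[OF f(3)] krg_ext_Inr[OF f(2)] in simp)
qed (simp add: krg_ext_Inl)

lemma obj_key_ksr: "f \<in> kmor E \<Longrightarrow> obj_key (ksr E f) = key_sr (mor_key f)"
proof (erule kmor_extE)
  fix c m x a b
  assume f: "f = Inr c" "rep c = ((m, x), a, b)" "((m, x), a, b) \<in> P_set G"
  then have "((m, x), b) \<in> V_set G"
    using P_setD[OF f(3)] unfolding V_set_def by simp
  then show ?thesis
    using f key_sr_pkey[OF f(3)] rep_Vcls ksr_ext_Inr[OF f(2)] by simp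
qed (simp add: ksr_ext_Inl)

lemma kdg_ext_key: "f \<in> kmor E \<Longrightarrow> kdg E f = key_dg (mor_key f)"
  by (erule kmor_extE) (simp_all add: kdg_ext_Inl kdg_ext_Inr pkey_simp)

lemma kid_ext_key:
  assumes "v \<in> kobj E"
  shows "kid E v \<in> kmor E \<and> mor_key (kid E v) = key_id (obj_key v)"
  using assms
proof (cases rule: kobj_extE)
  case (vclass c m x a)
  then have u: "((m, x), a, a) \<in> P_set G"
    using V_setD[OF vclass(4)] unfolding P_set_def by simp
  moreover have "x (meet_en a m) (meet_en a m) = iG (vtx G x (meet_en a m))"
    using gm_id V_setD[OF vclass(4)] le_en_meet_en unfolding vtx_def by blast
  ultimately show ?thesis
    using vclass kid_ext_Inr[OF vclass(3)] Pcls_kmor_ext mor_key_Pcls by (simp add: pkey_simp vkey_simp)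
qed (simp add: kid_ext_Inl kmor_ext id_mor)

lemma composable_ext_iff:
  "f \<in> kmor E \<Longrightarrow> g \<in> kmor E \<Longrightarrow> ksr E f = krg E g \<longleftrightarrow> key_sr (mor_key f) = key_rg (mor_key g)"
  using inj_on_obj_key[THEN inj_onD] ksr_ext_obj krg_ext_obj obj_key_ksr obj_key_krg by metis


lemma kcp_ext_path_class_key:
  assumes l: "l \<in> MG" and c: "rep c = ((m, x), a, b)" "((m, x), a, b) \<in> P_set G"
    and lc: "ksr E (Inl l) = krg E (Inr c)"
  shows "kcp E (Inl l) (Inr c) \<in> kmor E \<and>
    mor_key (kcp E (Inl l) (Inr c)) = key_cp (Inl l) (mor_key (Inr c))"
proof -
  have am: "le_en a m" and sl: "sG l = vtx G x a"
    using lc unfolding ksr_ext_Inl krg_ext_Inr[OF c(1)] by (auto split: if_splits)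
  show ?thesis
    using cat_shift_path_P_set[OF l c(2) am sl] Pcls_kmor_ext mor_key_Pcls meet_en_eq[OF am]
    unfolding kcp_ext_Inl_Inr[OF c(1)] by (simp add: c(1) pkey_simp)
qed

lemma kcp_ext_class_class_key:
  assumes c: "rep c = ((m, x), a, b)" "((m, x), a, b) \<in> P_set G"
    and c': "rep c' = ((m', y), p, q)" "((m', y), p, q) \<in> P_set G"
    and cc: "ksr E (Inr c) = krg E (Inr c')"
  shows "kcp E (Inr c) (Inr c') \<in> kmor E \<and>
    mor_key (kcp E (Inr c) (Inr c')) = key_cp (mor_key (Inr c)) (mor_key (Inr c'))"
proof -
  have "Vcls G ((m, x), b) = Vcls G ((m', y), p)"
    using cc unfolding ksr_ext_Inr[OF c(1)] krg_ext_Inr[OF c'(1)] by (auto split: if_splits)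
  moreover have "((m, x), b) \<in> V_set G"
    using P_setD[OF c(2)] by (simp add: V_set_def)
  ultimately have "vkey ((m, x), b) = vkey ((m', y), p)"
    using Vcls_eq_iff by blast
  then show ?thesis
    using cat_shift_class_P_set[OF c(2) c'(2)] Pcls_kmor_ext mor_key_Pcls
    unfolding kcp_ext_Inr_Inr[OF c(1) c'(1)] by (simp add: c(1) c'(1) pkey_simp)
qed

lemma kcp_ext_key:
  assumes f: "f \<in> kmor E" and g: "g \<in> kmor E" and fg: "ksr E f = krg E g"
  shows "kcp E f g \<in> kmor E \<and> mor_key (kcp E f g) = key_cp (mor_key f) (mor_key g)"
  using f g
proof (cases rule: kmor_extE[case_product kmor_extE])
  case (path_path l l')
  then show ?thesis
    using fg by (simp add: ksr_ext_Inl krg_ext_Inl kcp_ext_Inl_Inl kmor_ext cp_mor)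
next
  case (path_pclass l c m x a b)
  then show ?thesis
    using kcp_ext_path_class_key fg by simp
next
  case (pclass_path c m x a b l)
  then show ?thesis
    using fg by (simp add: ksr_ext_Inr krg_ext_Inl)
next
  case (pclass_pclass c m x a b c' m' y p q)
  then show ?thesis
    using kcp_ext_class_class_key fg by simp
qed

lemma ext_cp:
  assumes f: "f \<in> kmor E" and g: "g \<in> kmor E" and fg: "ksr E f = krg E g"
  shows "kcp E f g \<in> kmor E \<and> krg E (kcp E f g) = krg E f \<and> ksr E (kcp E f g) = ksr E g
    \<and> kdg E (kcp E f g) = kdg E f + kdg E g"
proof -
  have fg': "kcp E f g \<in> kmor E" "mor_key (kcp E f g) = key_cp (mor_key f) (mor_key g)"
    using kcp_ext_key[OF f g fg] by auto
  have m: "key_sr (mor_key f) = key_rg (mor_key g)"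
    using composable_ext_iff[OF f g] fg by simp
  have w: "wf_mkey (mor_key f)" "wf_mkey (mor_key g)"
    using wf_mor_key f g by auto
  have "krg E (kcp E f g) = krg E f"
    by (rule inj_onD[OF inj_on_obj_key])
      (simp_all add: obj_key_krg fg' f key_rg_cp[OF m w] krg_ext_obj)
  moreover have "ksr E (kcp E f g) = ksr E g"
    by (rule inj_onD[OF inj_on_obj_key])
      (simp_all add: obj_key_ksr fg' g key_sr_cp[OF m w] ksr_ext_obj)
  moreover have "kdg E (kcp E f g) = kdg E f + kdg E g"
    using kdg_ext_key fg' f g key_dg_cp[OF m w] by simp
  ultimately show ?thesis
    using fg' by simp
qed

lemma ext_id:
  assumes v: "v \<in> kobj E"
  shows "kid E v \<in> kmor E \<and> krg E (kid E v) = v \<and> ksr E (kid E v) = v \<and> kdg E (kid E v) = 0"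
proof -
  have i: "kid E v \<in> kmor E" "mor_key (kid E v) = key_id (obj_key v)"
    using kid_ext_key[OF v] by auto
  note key_id = key_id_props[OF wf_obj_key[OF v]]
  have "krg E (kid E v) = v"
    by (rule inj_onD[OF inj_on_obj_key]) (simp_all add: obj_key_krg i key_id krg_ext_obj v)
  moreover have "ksr E (kid E v) = v"
    by (rule inj_onD[OF inj_on_obj_key]) (simp_all add: obj_key_ksr i key_id ksr_ext_obj v)
  moreover have "kdg E (kid E v) = 0"
    using kdg_ext_key i key_id by simp
  ultimately show ?thesis
    using i by simp
qed

lemma ext_cp_assoc:
  assumes f: "f \<in> kmor E" and g: "g \<in> kmor E" and h: "h \<in> kmor E"
    and fg: "ksr E f = krg E g" and gh: "ksr E g = krg E h"
  shows "kcp E (kcp E f g) h = kcp E f (kcp E g h)"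
proof -
  have fg': "kcp E f g \<in> kmor E" "ksr E (kcp E f g) = krg E h"
    and gh': "kcp E g h \<in> kmor E" "ksr E f = krg E (kcp E g h)"
    using ext_cp[OF f g fg] ext_cp[OF g h gh] fg gh by auto
  have "key_cp (key_cp (mor_key f) (mor_key g)) (mor_key h)
      = key_cp (mor_key f) (key_cp (mor_key g) (mor_key h))"
    using key_cp_assoc composable_ext_iff[OF f g] composable_ext_iff[OF g h] fg gh wf_mor_key f g h
    by simp
  moreover have "mor_key (kcp E (kcp E f g) h) = key_cp (key_cp (mor_key f) (mor_key g)) (mor_key h)"
    using kcp_ext_key[OF fg'(1) h fg'(2)] kcp_ext_key[OF f g fg] by simp
  moreover have "mor_key (kcp E f (kcp E g h)) = key_cp (mor_key f) (key_cp (mor_key g) (mor_key h))"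
    using kcp_ext_key[OF f gh'(1) gh'(2)] kcp_ext_key[OF g h gh] by simp
  ultimately show ?thesis
    using inj_on_mor_key[THEN inj_onD] kcp_ext_key[OF fg'(1) h fg'(2)] kcp_ext_key[OF f gh'] by simp
qed

lemma ext_id_cp: "f \<in> kmor E \<Longrightarrow> kcp E (kid E (krg E f)) f = f"
  by (rule inj_onD[OF inj_on_mor_key])
    (simp_all add: kcp_ext_key ext_id krg_ext_obj kid_ext_key obj_key_krg key_id_cp wf_mor_key)

lemma ext_cp_id: "f \<in> kmor E \<Longrightarrow> kcp E f (kid E (ksr E f)) = f"
  by (rule inj_onD[OF inj_on_mor_key])
    (simp_all add: kcp_ext_key ext_id ksr_ext_obj kid_ext_key obj_key_ksr key_cp_id wf_mor_key)

lemma ext_factorisation_unique: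
  assumes "f \<in> kmor E" "g \<in> kmor E" "f' \<in> kmor E" "g' \<in> kmor E"
    and "ksr E f = krg E g" "ksr E f' = krg E g'"
    and "kcp E f g = kcp E f' g'" "kdg E f = kdg E f'"
  shows "f = f' \<and> g = g'"
proof -
  have "key_cp (mor_key f) (mor_key g) = key_cp (mor_key f') (mor_key g')"
    using kcp_ext_key assms(1-7) by metis
  moreover have "key_dg (mor_key f) = key_dg (mor_key f')"
    using kdg_ext_key assms by metis
  ultimately have "mor_key f = mor_key f' \<and> mor_key g = mor_key g'"
    using key_factorisation_unique composable_ext_iff assms wf_mor_key by meson
  then show ?thesis
    using inj_on_mor_key[THEN inj_onD] assms by blast
qed


definition ext_seg :: "('a, 'k) gmor \<Rightarrow> ('k \<Rightarrow> nat) \<Rightarrow> ('k \<Rightarrow> nat) \<Rightarrow> 'a + ('a, 'k) pcls" where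
  "ext_seg y a c = (if le_en c (fst y) then Inl (snd y a c) else Inr (Pcls G (y, a, c)))"

lemma ext_seg_key:
  assumes bp: "is_bp G (m, x)" and ac: "a \<le> c"
  shows "ext_seg (m, x) a c \<in> kmor E \<and>
    mor_key (ext_seg (m, x) a c) = (if le_en c m then Inl (x a c) else Inr (pkey ((m, x), a, c)))"
proof (cases "le_en c m")
  case True
  then show ?thesis
    using gm_mor[of m x a c] bp ac unfolding ext_seg_def is_bp_def by (simp add: kmor_ext)
next
  case False
  then have "((m, x), a, c) \<in> P_set G"
    using bp ac by (simp add: P_set_def)
  then show ?thesis
    using False Pcls_kmor_ext mor_key_Pcls unfolding ext_seg_def by simp
qed

lemma kdg_ext_seg: "is_bp G (m, x) \<Longrightarrow> a \<le> c \<Longrightarrow> kdg E (ext_seg (m, x) a c) = c - a"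
  using ext_seg_key[of m x a c] kdg_ext_key dg_gm[of m x a c] unfolding is_bp_def
  by (simp add: pkey_simp split: if_splits)

lemma krg_ext_seg:
  assumes bp: "is_bp G (m, x)" and ac: "a \<le> c"
  shows "krg E (ext_seg (m, x) a c) = (if le_en a m then Inl (vtx G x a) else Inr (Vcls G ((m, x), a)))"
proof (rule inj_onD[OF inj_on_obj_key])
  have gm: "is_gm G (m, x)"
    using bp unfolding is_bp_def by simp
  show "krg E (ext_seg (m, x) a c) \<in> kobj E"
    using ext_seg_key[OF bp ac] krg_ext_obj by blast
  show "(if le_en a m then Inl (vtx G x a) else Inr (Vcls G ((m, x), a))) \<in> kobj E"
    using bp vtx_gm_obj[OF gm] by (simp add: kobj_ext Vtilde_def V_set_def)
  have "((m, x), a) \<in> V_set G" if "\<not> le_en a m"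
    using bp that by (simp add: V_set_def)
  moreover have "((m, x), a, c) \<in> P_set G" if "\<not> le_en c m"
    using bp ac that by (simp add: P_set_def)
  moreover have "le_en a m" if "le_en c m"
    using le_en_trans[OF ac that] .
  ultimately show "obj_key (krg E (ext_seg (m, x) a c)) =
      obj_key (if le_en a m then Inl (vtx G x a) else Inr (Vcls G ((m, x), a)))"
    using ext_seg_key[OF bp ac] obj_key_krg rg_gm[OF gm ac] key_rg_pkey rep_Vcls
    by (auto split: if_splits)
qed

lemma ext_seg_keys_cp:
  assumes bp: "is_bp G (m, x)" and ac: "a \<le> c" and cb: "c \<le> b"
  shows "key_sr (mor_key (ext_seg (m, x) a c)) = key_rg (mor_key (ext_seg (m, x) c b)) \<and>
    key_cp (mor_key (ext_seg (m, x) a c)) (mor_key (ext_seg (m, x) c b)) = mor_key (ext_seg (m, x) a b)"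
proof -
  have gm: "is_gm G (m, x)"
    using bp unfolding is_bp_def by simp
  have ab: "a \<le> b"
    using ac cb by (rule order_trans)
  show ?thesis
  proof (cases "le_en c m")
    case cm: True
    then have am: "le_en a m"
      using le_en_trans[OF ac] by blast
    show ?thesis
    proof (cases "le_en b m")
      case True
      then show ?thesis
        using ext_seg_key[OF bp ac] ext_seg_key[OF bp cb] ext_seg_key[OF bp ab] cm
          gm_sr_rg[OF gm ac cb True] gm_cp[OF gm ac cb True] by simp
    next
      case False
      let ?B = "meet_en b m"
      have cB: "c \<le> ?B"
        using meet_en_mono[OF cb, of m] meet_en_eq[OF cm] by simp
      then have "sG (x a c) = rG (x c ?B)" "cG (x a c) (x c ?B) = x a ?B" "dG (x a c) = c - a"
        using gm_sr_rg[OF gm ac cB] gm_cp[OF gm ac cB] dg_gm[OF gm ac cm] by (simp_all add: le_en_meet_en)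
      moreover have "c - a + (b - c) = b - a"
        using diff_split_fun[OF ac cb] by simp
      ultimately show ?thesis
        using ext_seg_key[OF bp ac] ext_seg_key[OF bp cb] ext_seg_key[OF bp ab] cm am False
          meet_en_eq[OF cm] meet_en_eq[OF am] by (simp add: pkey_simp)
    qed
  next
    case cm: False
    then have bm: "\<not> le_en b m"
      using le_en_trans[OF cb] by blast
    have P: "((m, x), a, c) \<in> P_set G" "((m, x), c, b) \<in> P_set G"
      using bp ac cb cm bm by (simp_all add: P_set_def)
    let ?A = "meet_en a m" and ?C = "meet_en c m" and ?B = "meet_en b m"
    have "?A \<le> ?C" "?C \<le> ?B"
      using meet_en_mono ac cb by blast+
    then have "cG (x ?A ?C) (x ?C ?B) = x ?A ?B"
      using gm_cp[OF gm] le_en_meet_en by blast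
    moreover have "c - a + (b - c) = b - a"
      using diff_split_fun[OF ac cb] by simp
    ultimately show ?thesis
      using ext_seg_key[OF bp ac] ext_seg_key[OF bp cb] ext_seg_key[OF bp ab] cm bm
        key_sr_pkey[OF P(1)] key_rg_pkey[OF P(2)] by (simp add: pkey_simp)
  qed
qed

lemma ext_seg_cp:
  assumes bp: "is_bp G (m, x)" and ac: "a \<le> c" and cb: "c \<le> b"
  shows "ksr E (ext_seg (m, x) a c) = krg E (ext_seg (m, x) c b)
    \<and> kcp E (ext_seg (m, x) a c) (ext_seg (m, x) c b) = ext_seg (m, x) a b"
proof -
  let ?f = "ext_seg (m, x) a c" and ?g = "ext_seg (m, x) c b"
  have ab: "a \<le> b"
    using ac cb by (rule order_trans)
  have f: "?f \<in> kmor E" and g: "?g \<in> kmor E"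
    using ext_seg_key[OF bp ac] ext_seg_key[OF bp cb] by simp_all
  note keys = ext_seg_keys_cp[OF bp ac cb]
  then have fg: "ksr E ?f = krg E ?g"
    using composable_ext_iff[OF f g] by simp
  moreover have "kcp E ?f ?g = ext_seg (m, x) a b"
    using keys kcp_ext_key[OF f g fg] ext_seg_key[OF bp ab] inj_on_mor_key[THEN inj_onD] by simp
  ultimately show ?thesis
    by simp
qed

lemma ext_factorisation:
  assumes l: "l \<in> kmor E" and d: "kdg E l = m + n"
  obtains f g where "f \<in> kmor E" "g \<in> kmor E" "ksr E f = krg E g" "kcp E f g = l"
    "kdg E f = m" "kdg E g = n"
  using l
proof (cases rule: kmor_extE)
  case (path la)
  then obtain a b where "a \<in> MG" "b \<in> MG" "sG a = rG b" "cG a b = la" "dG a = m" "dG b = n"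
    using factorisation d kdg_ext_Inl by metis
  then show ?thesis
    using that[of "Inl a" "Inl b"] path
    by (simp add: kmor_ext ksr_ext_Inl krg_ext_Inl kcp_ext_Inl_Inl kdg_ext_Inl)
next
  case (pclass c m0 x a b)
  have bp: "is_bp G (m0, x)" and ab: "a \<le> b" and bm: "\<not> le_en b m0"
    using P_setD[OF pclass(4)] by auto
  have l: "l = ext_seg (m0, x) a b"
    using pclass Ptilde_rep[OF pclass(2)] bm unfolding ext_seg_def by simp
  have "b = a + m + n"
  proof
    fix i
    have "b - a = m + n"
      using d pclass kdg_ext_Inr by simp
    then have "b i - a i = m i + n i"
      by (simp add: fun_eq_iff)
    then show "b i = (a + m + n) i"
      using le_funD[OF ab, of i] by simp
  qed
  then have am: "a \<le> a + m" and mb: "a + m \<le> b" and "a + m - a = m" "b - (a + m) = n"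
    by (simp_all add: le_add_fun)
  then show ?thesis
    using that[of "ext_seg (m0, x) a (a + m)" "ext_seg (m0, x) (a + m) b"] l
      ext_seg_cp[OF bp am mb] ext_seg_key[OF bp am] ext_seg_key[OF bp mb]
      kdg_ext_seg[OF bp am] kdg_ext_seg[OF bp mb] by simp
qed


lemma countable_Vtilde: "countable (Vtilde G)"
proof (rule countable_image_inj_on[OF _ inj_on_vkey_rep])
  have "(\<lambda>c. vkey (rep c)) ` Vtilde G \<subseteq> OG \<times> UNIV"
  proof
    fix w
    assume "w \<in> (\<lambda>c. vkey (rep c)) ` Vtilde G"
    then obtain c where "c \<in> Vtilde G" "w = vkey (rep c)"
      by blast
    moreover have "wf_okey (obj_key (Inr c))" if "c \<in> Vtilde G"
      using wf_obj_key[of "Inr c"] that by (simp add: kobj_ext)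
    ultimately show "w \<in> OG \<times> UNIV"
      by (auto simp: wf_okey_def split: prod.splits)
  qed
  then show "countable ((\<lambda>c. vkey (rep c)) ` Vtilde G)"
    by (rule countable_subset) (simp add: countable_obj)
qed

lemma countable_Ptilde: "countable (Ptilde G)"
proof (rule countable_image_inj_on[OF _ inj_on_pkey_rep])
  have "(\<lambda>c. pkey (rep c)) ` Ptilde G \<subseteq> MG \<times> UNIV"
  proof
    fix w
    assume "w \<in> (\<lambda>c. pkey (rep c)) ` Ptilde G"
    then obtain c where "c \<in> Ptilde G" "w = pkey (rep c)"
      by blast
    moreover have "wf_mkey (mor_key (Inr c))" if "c \<in> Ptilde G"
      using wf_mor_key[of "Inr c"] that by (simp add: kmor_ext)
    ultimately show "w \<in> MG \<times> UNIV"
      by (auto simp: wf_mkey_def wf_pkey_def split: prod.splits)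
  qed
  then show "countable ((\<lambda>c. pkey (rep c)) ` Ptilde G)"
    by (rule countable_subset) (simp add: countable_mor)
qed

lemma k_graph_ext: "k_graph E"
  unfolding k_graph_def
proof (intro conjI ballI allI impI)
  show "countable (kobj E)"
    using countable_obj countable_Vtilde by (simp add: kobj_ext)
  show "countable (kmor E)"
    using countable_mor countable_Ptilde by (simp add: kmor_ext)
  fix l m n
  assume l: "l \<in> kmor E" and d: "kdg E l = m + n"
  obtain f g where fg: "f \<in> kmor E" "g \<in> kmor E" "ksr E f = krg E g" "kcp E f g = l"
    "kdg E f = m" "kdg E g = n"
    using ext_factorisation[OF l d] .
  show "\<exists>!p. p \<in> kmor E \<times> kmor E \<and> ksr E (fst p) = krg E (snd p)
      \<and> kcp E (fst p) (snd p) = l \<and> kdg E (fst p) = m \<and> kdg E (snd p) = n"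
  proof (rule ex1I[of _ "(f, g)"])
    fix p
    assume "p \<in> kmor E \<times> kmor E \<and> ksr E (fst p) = krg E (snd p)
      \<and> kcp E (fst p) (snd p) = l \<and> kdg E (fst p) = m \<and> kdg E (snd p) = n"
    then show "p = (f, g)"
      using ext_factorisation_unique[of "fst p" "snd p" f g] fg by (auto simp: prod_eq_iff)
  qed (use fg in simp)
qed (simp_all add: krg_ext_obj ksr_ext_obj ext_id ext_cp ext_cp_assoc ext_id_cp ext_cp_id)


section \<open>Boundary paths and absence of sources\<close>

lemma has_edge_rg:
  assumes mu: "mu \<in> MG" and e: "has_edge (sG mu) i"
  shows "has_edge (rG mu) i"
proof -
  obtain e where e: "e \<in> MG" "rG e = sG mu" "dG e = e_vec i"
    using e by blast
  then have "cG mu e \<in> MG" "dG (cG mu e) = e_vec i + dG mu" "rG (cG mu e) = rG mu"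
    using mu by (simp_all add: cp_mor dg_cp rg_cp add.commute)
  then obtain g1 g2 where "g1 \<in> MG" "g2 \<in> MG" "sG g1 = rG g2" "cG g1 g2 = cG mu e" "dG g1 = e_vec i"
    using factorisation by metis
  then show ?thesis
    using \<open>rG (cG mu e) = rG mu\<close> rg_cp by metis
qed

definition is_prefix :: "'a \<Rightarrow> 'a \<Rightarrow> bool" where
  "is_prefix a b \<longleftrightarrow> a \<in> MG \<and> (\<exists>nu\<in>MG. sG a = rG nu \<and> b = cG a nu)"

lemma is_prefix_refl: "a \<in> MG \<Longrightarrow> is_prefix a a"
  unfolding is_prefix_def using cp_id id_mor sr_obj rg_id by metis

lemma is_prefix_trans:
  assumes "is_prefix a b" "is_prefix b c"
  shows "is_prefix a c"
proof -
  obtain n1 where n1: "a \<in> MG" "n1 \<in> MG" "sG a = rG n1" "b = cG a n1"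
    using assms(1) unfolding is_prefix_def by blast
  obtain n2 where n2: "n2 \<in> MG" "sG b = rG n2" "c = cG b n2"
    using assms(2) unfolding is_prefix_def by blast
  have "sG n1 = rG n2"
    using n1 n2(2) sr_cp by metis
  then show ?thesis
    unfolding is_prefix_def using n1 n2 cp_assoc[of a n1 n2]
    by (intro conjI bexI[of _ "cG n1 n2"]) (simp_all add: cp_mor rg_cp)
qed

lemma is_prefixD:
  assumes "is_prefix a b"
  shows "a \<in> MG" "b \<in> MG" "rG b = rG a" "dG a \<le> dG b"
  using assms unfolding is_prefix_def by (auto simp: cp_mor rg_cp dg_cp le_add_fun)

lemma seg_is_prefix: "is_prefix a b \<Longrightarrow> p \<le> q \<Longrightarrow> q \<le> dG a \<Longrightarrow> seg G b p q = seg G a p q"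
  unfolding is_prefix_def using seg_cp_right by blast

definition add_edge :: "'a \<Rightarrow> 'k \<Rightarrow> 'a" where
  "add_edge lam i = (if has_edge (sG lam) i
     then cG lam (SOME e. e \<in> MG \<and> rG e = sG lam \<and> dG e = e_vec i) else lam)"

lemma add_edge_has_edge:
  assumes "has_edge (sG lam) i"
  obtains e where "e \<in> MG" "rG e = sG lam" "dG e = e_vec i" "add_edge lam i = cG lam e"
proof -
  let ?e = "SOME e. e \<in> MG \<and> rG e = sG lam \<and> dG e = e_vec i"
  have "?e \<in> MG \<and> rG ?e = sG lam \<and> dG ?e = e_vec i"
    using someI_ex assms by (metis (mono_tags, lifting))
  then show thesis
    using that[of ?e] assms unfolding add_edge_def by simp
qed

lemma is_prefix_add_edge:
  assumes "lam \<in> MG"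
  shows "is_prefix lam (add_edge lam i)"
proof (cases "has_edge (sG lam) i")
  case True
  then obtain e where "e \<in> MG" "rG e = sG lam" "add_edge lam i = cG lam e"
    by (rule add_edge_has_edge)
  then show ?thesis
    unfolding is_prefix_def using assms by (intro conjI bexI[of _ e]) simp_all
next
  case False
  then show ?thesis
    unfolding add_edge_def using is_prefix_refl[OF assms] by (simp only: if_False)
qed

lemma add_edge_stuck:
  assumes "lam \<in> MG" "dG (add_edge lam i) i = dG lam i"
  shows "\<not> has_edge (sG lam) i"
proof
  assume "has_edge (sG lam) i"
  then obtain e where "e \<in> MG" "rG e = sG lam" "dG e = e_vec i" "add_edge lam i = cG lam e"
    by (rule add_edge_has_edge)
  then have "dG (add_edge lam i) i = dG lam i + 1"
    using assms(1) by (simp add: dg_cp e_vec_def)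
  then show False
    using assms(2) by simp
qed

lemma foldl_add_edge:
  "lam \<in> MG \<Longrightarrow> is_prefix lam (foldl add_edge lam L) \<and>
   (\<forall>i\<in>set L. \<exists>l'. is_prefix lam l' \<and> is_prefix (add_edge l' i) (foldl add_edge lam L))"
proof (induction L arbitrary: lam)
  case Nil
  then show ?case
    using is_prefix_refl by simp
next
  case (Cons i L)
  have e1: "is_prefix lam (add_edge lam i)"
    using is_prefix_add_edge[OF Cons.prems] .
  note IH = Cons.IH[OF is_prefixD(2)[OF e1]]
  have "is_prefix lam (foldl add_edge lam (i # L))"
    using is_prefix_trans[OF e1] IH by simp
  moreover have "\<exists>l'. is_prefix lam l' \<and> is_prefix (add_edge l' j) (foldl add_edge lam (i # L))"
    if "j \<in> set (i # L)" for j
  proof (cases "j \<in> set L")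
    case True
    then obtain l' where "is_prefix (add_edge lam i) l'"
      "is_prefix (add_edge l' j) (foldl add_edge (add_edge lam i) L)"
      using IH by blast
    then show ?thesis
      using is_prefix_trans[OF e1] by auto
  next
    case False
    then show ?thesis
      using that IH is_prefix_refl[OF Cons.prems] by auto
  qed
  ultimately show ?case
    by blast
qed

definition colours :: "'k list" where
  "colours = (SOME L. set L = UNIV)"

lemma set_colours: "set colours = UNIV"
  unfolding colours_def by (rule someI_ex) (rule finite_list, simp)

text \<open>Starting from a vertex, repeatedly try to append an edge of every colour; in the limit
  this gives a boundary path.\<close>

definition greedy :: "'v \<Rightarrow> nat \<Rightarrow> 'a" where
  "greedy w j = ((\<lambda>lam. foldl add_edge lam colours) ^^ j) (iG w)"

definition greedy_deg :: "'v \<Rightarrow> 'k \<Rightarrow> enat" where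
  "greedy_deg w i = (SUP j. enat (dG (greedy w j) i))"

definition greedy_lim :: "'v \<Rightarrow> ('k \<Rightarrow> nat) \<Rightarrow> ('k \<Rightarrow> nat) \<Rightarrow> 'a" where
  "greedy_lim w p q = seg G (greedy w (LEAST j. q \<le> dG (greedy w j))) p q"

lemma greedy_Suc: "greedy w (Suc j) = foldl add_edge (greedy w j) colours"
  by (simp add: greedy_def)

lemma greedy_mor: "w \<in> OG \<Longrightarrow> greedy w j \<in> MG \<and> rG (greedy w j) = w"
proof (induction j)
  case 0
  then show ?case
    by (simp add: greedy_def id_mor rg_id)
next
  case (Suc j)
  then show ?case
    using foldl_add_edge[of "greedy w j" colours] is_prefixD[of "greedy w j"]
    by (simp add: greedy_Suc)
qed

lemma greedy_prefix:
  assumes "w \<in> OG" "j \<le> j'"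
  shows "is_prefix (greedy w j) (greedy w j')"
  using assms(2)
proof (induction j' rule: dec_induct)
  case base
  then show ?case
    using greedy_mor[OF assms(1)] is_prefix_refl by blast
next
  case (step j')
  then show ?case
    using is_prefix_trans[OF step.IH] foldl_add_edge greedy_mor[OF assms(1)] by (simp add: greedy_Suc)
qed

lemma greedy_dg_mono: "w \<in> OG \<Longrightarrow> j \<le> j' \<Longrightarrow> dG (greedy w j) \<le> dG (greedy w j')"
  using greedy_prefix is_prefixD(4) by blast


lemma greedy_lim_eq:
  assumes "w \<in> OG" "p \<le> q" "q \<le> dG (greedy w j)"
  shows "greedy_lim w p q = seg G (greedy w j) p q"
proof -
  let ?j0 = "LEAST j. q \<le> dG (greedy w j)"
  have "q \<le> dG (greedy w ?j0)" "?j0 \<le> j"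
    using LeastI[of "\<lambda>j. q \<le> dG (greedy w j)"] Least_le[of "\<lambda>j. q \<le> dG (greedy w j)"] assms(3)
    by blast+
  then show ?thesis
    unfolding greedy_lim_def using seg_is_prefix[OF greedy_prefix[OF assms(1)] assms(2)] by simp
qed

lemma le_greedy_deg_iff:
  assumes w: "w \<in> OG"
  shows "le_en q (greedy_deg w) \<longleftrightarrow> (\<exists>j. q \<le> dG (greedy w j))"
proof
  assume q: "le_en q (greedy_deg w)"
  have "\<exists>j. q i \<le> dG (greedy w j) i" for i
  proof -
    have "enat (q i) \<le> (SUP j. enat (dG (greedy w j) i))"
      using q unfolding le_en_def greedy_deg_def by simp
    then show ?thesis
      by (rule SUP_enat_reaches) blast
  qed
  then obtain J where J: "\<And>i. q i \<le> dG (greedy w (J i)) i"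
    by metis
  define j where "j = Max (range J)"
  have "J i \<le> j" for i
    unfolding j_def by (rule Max_ge) auto
  then have "q i \<le> dG (greedy w j) i" for i
    using J greedy_dg_mono[OF w] le_funD order_trans by metis
  then show "\<exists>j. q \<le> dG (greedy w j)"
    by (auto simp: le_fun_def)
next
  assume "\<exists>j. q \<le> dG (greedy w j)"
  then obtain j where j: "q \<le> dG (greedy w j)"
    by blast
  show "le_en q (greedy_deg w)"
    unfolding le_en_def greedy_deg_def
  proof
    fix i
    have "enat (q i) \<le> enat (dG (greedy w j) i)"
      using j by (simp add: le_fun_def)
    then show "enat (q i) \<le> (SUP j. enat (dG (greedy w j) i))"
      by (rule SUP_upper2[OF UNIV_I])
  qed
qed

lemma greedy_lim_gm:
  assumes w: "w \<in> OG"
  shows "is_gm G (greedy_deg w, greedy_lim w)"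
  unfolding is_gm_def prod.case
proof (intro conjI allI impI)
  fix p q
  assume "p \<le> q \<and> le_en q (greedy_deg w)"
  then obtain j where "p \<le> q" "q \<le> dG (greedy w j)"
    using le_greedy_deg_iff[OF w] by blast
  then show "greedy_lim w p q \<in> MG" "dG (greedy_lim w p q) = q - p"
    using greedy_lim_eq[OF w] seg_mor dg_seg greedy_mor[OF w] by simp_all
next
  fix p
  assume "le_en p (greedy_deg w)"
  then obtain j where "p \<le> dG (greedy w j)"
    using le_greedy_deg_iff[OF w] by blast
  then show "greedy_lim w p p = iG (rG (greedy_lim w p p))"
    using greedy_lim_eq[OF w order_refl] seg_empty greedy_mor[OF w] by simp
next
  fix p q t
  assume pqt: "p \<le> q \<and> q \<le> t \<and> le_en t (greedy_deg w)"
  then obtain j where j: "t \<le> dG (greedy w j)"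
    using le_greedy_deg_iff[OF w] by blast
  moreover have "q \<le> dG (greedy w j)" "p \<le> t"
    using pqt j order_trans by blast+
  ultimately show "sG (greedy_lim w p q) = rG (greedy_lim w q t)"
    "cG (greedy_lim w p q) (greedy_lim w q t) = greedy_lim w p t"
    using greedy_lim_eq[OF w] seg_cp_seg[OF conjunct1[OF greedy_mor[OF w]], of p q t] pqt by simp_all
qed

lemma vtx_greedy_lim_zero: "w \<in> OG \<Longrightarrow> vtx G (greedy_lim w) 0 = w"
  unfolding vtx_def
  using greedy_lim_eq[of w 0 0 0] rg_seg_zero[of "greedy w 0" 0] greedy_mor[of w 0]
  by (simp add: zero_le_fun)

lemma greedy_deg_stable:
  assumes w: "w \<in> OG"
  obtains J where "\<And>i j. greedy_deg w i \<noteq> \<infinity> \<Longrightarrow> J \<le> j \<Longrightarrow> enat (dG (greedy w j) i) = greedy_deg w i"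
proof -
  have "\<exists>j0. \<forall>j\<ge>j0. enat (dG (greedy w j) i) = greedy_deg w i" if fin: "greedy_deg w i \<noteq> \<infinity>" for i
  proof -
    obtain N where N: "greedy_deg w i = enat N"
      using fin by auto
    then have "enat N \<le> (SUP j. enat (dG (greedy w j) i))"
      unfolding greedy_deg_def by simp
    then obtain j0 where j0: "N \<le> dG (greedy w j0) i"
      by (rule SUP_enat_reaches)
    have "enat (dG (greedy w j) i) = greedy_deg w i" if "j0 \<le> j" for j
    proof -
      have "N \<le> dG (greedy w j) i"
        using j0 le_funD[OF greedy_dg_mono[OF w that], of i] by simp
      moreover have "enat (dG (greedy w j) i) \<le> greedy_deg w i"
        unfolding greedy_deg_def by (rule SUP_upper) simp
      ultimately show ?thesis
        using N by simp
    qed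
    then show ?thesis
      by blast
  qed
  then have "\<forall>i. \<exists>j0. greedy_deg w i \<noteq> \<infinity> \<longrightarrow>
      (\<forall>j\<ge>j0. enat (dG (greedy w j) i) = greedy_deg w i)"
    by blast
  then obtain J0 where J0: "\<forall>i. greedy_deg w i \<noteq> \<infinity> \<longrightarrow>
      (\<forall>j\<ge>J0 i. enat (dG (greedy w j) i) = greedy_deg w i)"
    by (rule choice[THEN exE])
  show thesis
  proof (rule that)
    fix i j
    assume "greedy_deg w i \<noteq> \<infinity>" "Max (range J0) \<le> j"
    moreover have "J0 i \<le> Max (range J0)"
      by (rule Max_ge) auto
    ultimately show "enat (dG (greedy w j) i) = greedy_deg w i"
      using J0 by simp
  qed
qed


lemma sr_greedy_prefix:
  assumes w: "w \<in> OG" and l: "is_prefix l (greedy w j)"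
  shows "sG l = vtx G (greedy_lim w) (dG l)"
proof -
  have d: "dG l \<le> dG (greedy w j)"
    using is_prefixD(4)[OF l] .
  then have "le_en (dG l) (greedy_deg w)"
    using le_greedy_deg_iff[OF w] by blast
  moreover have "greedy_lim w 0 (dG l) = l"
    using greedy_lim_eq[OF w zero_le_fun d] seg_is_prefix[OF l zero_le_fun order_refl]
      seg_all[OF is_prefixD(1)[OF l]] by simp
  ultimately show ?thesis
    using sr_gm[OF greedy_lim_gm[OF w] zero_le_fun] by metis
qed

lemma greedy_stuck_prefix:
  assumes w: "w \<in> OG" and stable: "dG (greedy w J) i = dG (greedy w (Suc J)) i"
  obtains l' where "is_prefix l' (greedy w (Suc J))" "\<not> has_edge (sG l') i"
proof -
  obtain l' where l': "is_prefix (greedy w J) l'" "is_prefix (add_edge l' i) (greedy w (Suc J))"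
    using foldl_add_edge[of "greedy w J" colours] greedy_mor[OF w] set_colours
    unfolding greedy_Suc by blast
  have l'm: "l' \<in> MG"
    using is_prefixD(2)[OF l'(1)] .
  note e1 = is_prefix_add_edge[OF l'm, of i]
  have "dG (greedy w J) i \<le> dG l' i" "dG l' i \<le> dG (add_edge l' i) i"
    "dG (add_edge l' i) i \<le> dG (greedy w (Suc J)) i"
    using is_prefixD(4)[OF l'(1)] is_prefixD(4)[OF e1] is_prefixD(4)[OF l'(2)]
    by (simp_all add: le_fun_def)
  then have "dG (add_edge l' i) i = dG l' i"
    using stable by linarith
  then show thesis
    using that is_prefix_trans[OF e1 l'(2)] add_edge_stuck[OF l'm] by blast
qed

lemma greedy_lim_bp:
  assumes w: "w \<in> OG"
  shows "is_bp G (greedy_deg w, greedy_lim w)"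
proof -
  note gm = greedy_lim_gm[OF w]
  obtain J where J: "\<And>i j. greedy_deg w i \<noteq> \<infinity> \<Longrightarrow> J \<le> j \<Longrightarrow>
      enat (dG (greedy w j) i) = greedy_deg w i"
    using greedy_deg_stable[OF w] by blast
  have "le_en (dG (greedy w (Suc J))) (greedy_deg w)"
    using le_greedy_deg_iff[OF w] by blast
  moreover have "\<not> has_edge (vtx G (greedy_lim w) p) i"
    if p: "dG (greedy w (Suc J)) \<le> p" "le_en p (greedy_deg w)" "enat (p i) = greedy_deg w i"
    for p i
  proof -
    have "greedy_deg w i \<noteq> \<infinity>"
      using p(3) by (metis enat.distinct(1))
    then have "enat (dG (greedy w J) i) = enat (dG (greedy w (Suc J)) i)"
      using J[of i J] J[of i "Suc J"] by simp
    then have "dG (greedy w J) i = dG (greedy w (Suc J)) i"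
      by simp
    then obtain l' where l': "is_prefix l' (greedy w (Suc J))" "\<not> has_edge (sG l') i"
      by (rule greedy_stuck_prefix[OF w])
    define D where "D = dG l'"
    have Dp: "D \<le> p"
      using is_prefixD(4)[OF l'(1)] p(1) unfolding D_def by (rule order_trans)
    have "sG l' = vtx G (greedy_lim w) D"
      unfolding D_def by (rule sr_greedy_prefix[OF w l'(1)])
    then have rg: "rG (greedy_lim w D p) = sG l'"
      using rg_gm[OF gm Dp p(2)] by simp
    show ?thesis
    proof
      assume "has_edge (vtx G (greedy_lim w) p) i"
      then have "has_edge (sG l') i"
        using has_edge_rg[OF gm_mor[OF gm Dp p(2)], of i] sr_gm[OF gm Dp p(2)] rg by simp
      then show False
        using l'(2) by blast
    qed
  qed
  ultimately show ?thesis
    using gm unfolding is_bp_def by auto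
qed

lemma ext_no_sources:
  assumes v: "v \<in> kobj E"
  shows "\<exists>l\<in>kmor E. krg E l = v \<and> kdg E l = n"
  using v
proof (cases rule: kobj_extE)
  case (vertex w)
  note bp = greedy_lim_bp[OF vertex(2)]
  show ?thesis
    using ext_seg_key[OF bp zero_le_fun] krg_ext_seg[OF bp zero_le_fun] kdg_ext_seg[OF bp zero_le_fun]
      vtx_greedy_lim_zero[OF vertex(2)] vertex(1) le_en_zero
    by (intro bexI[of _ "ext_seg (greedy_deg w, greedy_lim w) 0 n"]) simp_all
next
  case (vclass c m x a)
  have bp: "is_bp G (m, x)" and am: "\<not> le_en a m"
    using V_setD[OF vclass(4)] by auto
  have "Inr (Vcls G ((m, x), a)) = v"
    using vclass Vtilde_rep[OF vclass(2)] by simp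
  then show ?thesis
    using ext_seg_key[OF bp le_add_fun] krg_ext_seg[OF bp le_add_fun] kdg_ext_seg[OF bp le_add_fun] am
    by (intro bexI[of _ "ext_seg (m, x) a (a + n)"]) simp_all
qed

end

theorem theorem3p24:
  fixes G :: "('v, 'a, 'k::finite) kgraph"
  assumes "k_graph G"
  shows "k_graph (ext G) \<and>
         (\<forall>v \<in> kobj (ext G). \<forall>n :: 'k \<Rightarrow> nat.
            \<exists>l \<in> kmor (ext G). krg (ext G) l = v \<and> kdg (ext G) l = n)"
proof -
  interpret k_graph_ctx G
    by (rule k_graph_ctx.intro) (rule assms)
  show ?thesis
    using k_graph_ext ext_no_sources by blast
qed

end
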